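(* Let $\mu_\varepsilon$ be a Borel probability measure on $\mathbb{R}$ and let $\eta$ be a finite non-negative Borel measure on $\mathbb{R}$ with $$\eta(\mathbb{R})<2\min\{(\eta*\mu_\varepsilon)(\{0\}),\,1\}.$$ Then the operator $\nu\mapsto\eta*\mu_\varepsilon*\nu$ is invertible (i.e. has a bounded linear inverse) on the Banach space $(\mathcal{M}(\mathbb{R},\mathcal{B}(\mathbb{R})),\|\cdot\|_{TV})$, and the operator $f\mapsto\big(\xi\mapsto\int_{\mathbb{R}}f(\xi-z)\,(\eta*\mu_\varepsilon)(dz)\big)$ is invertible on $(L^1(\mathbb{R}),\|\cdot\|_1)$.
   Context: $\mathcal{M}(\mathbb{R},\mathcal{B}(\mathbb{R}))$ is the space of finite signed Borel measures on $\mathbb{R}$ with total variation norm $\|\nu\|_{TV}:=|\nu|(\mathbb{R})$. Convolution of measures: $(\mu*\nu)(A):=\int\int\mathbf 1_A(x+y)\nu(dx)\mu(dy)$. *)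

theory Defs
  imports "HOL-Probability.Probability"
begin

text \<open>Finite signed Borel measures on the reals, represented as real-valued set
  functions that are countably additive on the Borel sets and (by convention)
  vanish on non-Borel sets, so that the space is a real vector space under
  pointwise operations.\<close>
definition signed_measure :: "(real set \<Rightarrow> real) \<Rightarrow> bool" where
  "signed_measure \<nu> \<longleftrightarrow>
     (\<forall>A. A \<notin> sets borel \<longrightarrow> \<nu> A = 0) \<and> \<nu> {} = 0 \<and>
     (\<forall>A :: nat \<Rightarrow> real set. range A \<subseteq> sets borel \<longrightarrow> disjoint_family A \<longrightarrow>
        (\<lambda>n. \<nu> (A n)) sums \<nu> (\<Union>n. A n))"

definition tv_norm :: "(real set \<Rightarrow> real) \<Rightarrow> real" where
  "tv_norm \<nu> = Sup {(\<Sum>i<n. \<bar>\<nu> (A i)\<bar>) | (n::nat) A.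
       (\<forall>i<n. A i \<in> sets borel) \<and> disjoint_family_on A {..<n}}"

definition conv_sm :: "real measure \<Rightarrow> (real set \<Rightarrow> real) \<Rightarrow> (real set \<Rightarrow> real)" where
  "conv_sm \<rho> \<nu> = (\<lambda>A. if A \<in> sets borel then (\<integral>y. \<nu> {x. x + y \<in> A} \<partial>\<rho>) else 0)"

definition sm_invertible :: "((real set \<Rightarrow> real) \<Rightarrow> (real set \<Rightarrow> real)) \<Rightarrow> bool" where
  "sm_invertible T \<longleftrightarrow>
     (\<forall>\<nu>. signed_measure \<nu> \<longrightarrow> signed_measure (T \<nu>)) \<and>
     (\<exists>S. (\<forall>\<nu>. signed_measure \<nu> \<longrightarrow> signed_measure (S \<nu>) \<and> T (S \<nu>) = \<nu> \<and> S (T \<nu>) = \<nu>) \<and>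
          (\<forall>\<nu> \<mu> a b. signed_measure \<nu> \<longrightarrow> signed_measure \<mu> \<longrightarrow>
               S (\<lambda>A. a * \<nu> A + b * \<mu> A) = (\<lambda>A. a * S \<nu> A + b * S \<mu> A)) \<and>
          (\<exists>C. \<forall>\<nu>. signed_measure \<nu> \<longrightarrow> tv_norm (S \<nu>) \<le> C * tv_norm \<nu>))"

definition conv_fun :: "real measure \<Rightarrow> (real \<Rightarrow> real) \<Rightarrow> (real \<Rightarrow> real)" where
  "conv_fun \<rho> f = (\<lambda>\<xi>. \<integral>z. f (\<xi> - z) \<partial>\<rho>)"

text \<open>Invertibility (bounded linear inverse) of an operator T on L^1(R), where elements
  of L^1 are represented by Lebesgue-integrable functions modulo a.e. equality.\<close>
definition L1_invertible :: "((real \<Rightarrow> real) \<Rightarrow> (real \<Rightarrow> real)) \<Rightarrow> bool" where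
  "L1_invertible T \<longleftrightarrow>
     (\<forall>f g. integrable lborel f \<longrightarrow> integrable lborel g \<longrightarrow> (AE x in lborel. f x = g x) \<longrightarrow>
         integrable lborel (T f) \<and> (AE x in lborel. T f x = T g x)) \<and>
     (\<exists>S. (\<forall>f g. integrable lborel f \<longrightarrow> integrable lborel g \<longrightarrow> (AE x in lborel. f x = g x) \<longrightarrow>
             integrable lborel (S f) \<and> (AE x in lborel. S f x = S g x)) \<and>
          (\<forall>f. integrable lborel f \<longrightarrow>
             (AE x in lborel. T (S f) x = f x) \<and> (AE x in lborel. S (T f) x = f x)) \<and>
          (\<forall>f g a b. integrable lborel f \<longrightarrow> integrable lborel g \<longrightarrow>
             (AE x in lborel. S (\<lambda>y. a * f y + b * g y) x = a * S f x + b * S g x)) \<and>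
          (\<exists>C. \<forall>f. integrable lborel f \<longrightarrow>
             (\<integral>x. \<bar>S f x\<bar> \<partial>lborel) \<le> C * (\<integral>x. \<bar>f x\<bar> \<partial>lborel)))"

end

(*
  Write \<rho> = \<eta> * \<mu>\<^sub>\<epsilon>. As \<mu>\<^sub>\<epsilon> is a probability measure, \<rho>(\<real>) = \<eta>(\<real>), so the hypothesis says
  \<rho> = a \<delta>\<^sub>0 + \<sigma> with a = \<rho>({0}) and \<sigma>(\<real>) < a. Hence \<rho> has the convolution inverse
  \<Sum>\<^sub>k (-1)\<^sup>k a\<^sup>-\<^sup>k\<^sup>-\<^sup>1 \<sigma>\<^sup>*\<^sup>k; its even and odd parts are finite positive measures K\<^sub>p, K\<^sub>m with
  \<rho> * K\<^sub>p = \<delta>\<^sub>0 + \<rho> * K\<^sub>m. Convolution with a finite positive measure K has norm at most K(\<real>)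
  both on signed measures and on L\<^sup>1, so convolution with K\<^sub>p minus convolution with K\<^sub>m is a
  bounded two-sided inverse on both spaces. Signed measures are reduced to positive ones
  through the Jordan decomposition.
*)

theory Submission
  imports Defs
begin

section \<open>Signed measures and the Jordan decomposition\<close>

lemma signed_measure_notin_sets: "signed_measure \<nu> \<Longrightarrow> A \<notin> sets borel \<Longrightarrow> \<nu> A = 0"
  unfolding signed_measure_def by auto

lemma signed_measure_empty: "signed_measure \<nu> \<Longrightarrow> \<nu> {} = 0"
  unfolding signed_measure_def by auto

lemma signed_measure_sums:
  "signed_measure \<nu> \<Longrightarrow> range A \<subseteq> sets borel \<Longrightarrow> disjoint_family A \<Longrightarrow>
    (\<lambda>n. \<nu> (A n)) sums \<nu> (\<Union>n. A n)"
  unfolding signed_measure_def by auto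

lemma signed_measure_Un:
  assumes \<nu>: "signed_measure \<nu>" and "A \<in> sets borel" "B \<in> sets borel" "A \<inter> B = {}"
  shows "\<nu> (A \<union> B) = \<nu> A + \<nu> B"
proof -
  have "(\<lambda>n. \<nu> (binaryset A B n)) sums \<nu> (\<Union>n. binaryset A B n)"
    using assms by (intro signed_measure_sums[OF \<nu>])
      (auto simp: range_binaryset_eq disjoint_family_on_def binaryset_def)
  moreover have "(\<lambda>n. \<nu> (binaryset A B n)) sums (\<nu> A + \<nu> B)"
    by (rule binaryset_sums) (simp add: signed_measure_empty[OF \<nu>])
  ultimately show ?thesis by (simp add: UN_binaryset_eq sums_unique2)
qed

lemma signed_measure_diff:
  assumes "signed_measure \<nu>" "A \<in> sets borel" "B \<in> sets borel" "B \<subseteq> A"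
  shows "\<nu> (A - B) = \<nu> A - \<nu> B"
proof -
  have "B \<union> (A - B) = A" using assms(4) by blast
  then have "\<nu> A = \<nu> B + \<nu> (A - B)"
    using signed_measure_Un[OF assms(1), of B "A - B"] assms(2,3) by auto
  then show ?thesis by simp
qed

lemma signed_measure_minus:
  "signed_measure \<nu> \<Longrightarrow> signed_measure \<mu> \<Longrightarrow> signed_measure (\<lambda>A. \<nu> A - \<mu> A)"
  unfolding signed_measure_def by (auto intro!: sums_diff)

lemma signed_measure_bounded_on_split:
  assumes \<nu>: "signed_measure \<nu>" and B: "B \<in> sets borel"
    and K\<^sub>1: "\<forall>C\<in>sets borel. C \<subseteq> B \<longrightarrow> \<bar>\<nu> C\<bar> \<le> K\<^sub>1"
    and K\<^sub>2: "\<forall>C\<in>sets borel. C \<subseteq> X - B \<longrightarrow> \<bar>\<nu> C\<bar> \<le> K\<^sub>2"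
    and C: "C \<in> sets borel" "C \<subseteq> X"
  shows "\<bar>\<nu> C\<bar> \<le> K\<^sub>1 + K\<^sub>2"
proof -
  have "(C \<inter> B) \<union> (C - B) = C" by blast
  then have "\<nu> C = \<nu> (C \<inter> B) + \<nu> (C - B)"
    using signed_measure_Un[OF \<nu>, of "C \<inter> B" "C - B"] B C by auto
  moreover have "\<bar>\<nu> (C \<inter> B)\<bar> \<le> K\<^sub>1"
    using bspec[OF K\<^sub>1, of "C \<inter> B"] B C by simp
  moreover have "\<bar>\<nu> (C - B)\<bar> \<le> K\<^sub>2"
    using bspec[OF K\<^sub>2, of "C - B"] B C by auto
  ultimately show ?thesis by linarith
qed

lemma signed_measure_unbounded_split:
  assumes \<nu>: "signed_measure \<nu>" and X: "X \<in> sets borel"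
    and unbounded: "\<forall>K. \<exists>B\<in>sets borel. B \<subseteq> X \<and> K < \<bar>\<nu> B\<bar>"
  shows "\<exists>Y\<in>sets borel. Y \<subseteq> X \<and> 1 \<le> \<bar>\<nu> (X - Y)\<bar> \<and> (\<forall>K. \<exists>B\<in>sets borel. B \<subseteq> Y \<and> K < \<bar>\<nu> B\<bar>)"
proof -
  obtain B where B: "B \<in> sets borel" "B \<subseteq> X" "\<bar>\<nu> X\<bar> + 1 < \<bar>\<nu> B\<bar>"
    using unbounded by blast
  have "\<nu> (X - B) = \<nu> X - \<nu> B"
    using signed_measure_diff[OF \<nu> X B(1,2)] .
  then have large: "1 \<le> \<bar>\<nu> B\<bar>" "1 \<le> \<bar>\<nu> (X - B)\<bar>"
    using B(3) by linarith+
  show ?thesis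
  proof (cases "\<forall>K. \<exists>C\<in>sets borel. C \<subseteq> B \<and> K < \<bar>\<nu> C\<bar>")
    case True
    with B large(2) show ?thesis by blast
  next
    case False
    then obtain K\<^sub>1 where K\<^sub>1: "\<forall>C\<in>sets borel. C \<subseteq> B \<longrightarrow> \<bar>\<nu> C\<bar> \<le> K\<^sub>1"
      by (auto simp: not_less)
    have "\<forall>K. \<exists>C\<in>sets borel. C \<subseteq> X - B \<and> K < \<bar>\<nu> C\<bar>"
    proof (rule ccontr)
      assume "\<not> ?thesis"
      then obtain K\<^sub>2 where K\<^sub>2: "\<forall>C\<in>sets borel. C \<subseteq> X - B \<longrightarrow> \<bar>\<nu> C\<bar> \<le> K\<^sub>2"
        by (auto simp: not_less)
      obtain C where "C \<in> sets borel" "C \<subseteq> X" "K\<^sub>1 + K\<^sub>2 < \<bar>\<nu> C\<bar>"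
        using unbounded by blast
      with signed_measure_bounded_on_split[OF \<nu> B(1) K\<^sub>1 K\<^sub>2] show False
        by fastforce
    qed
    moreover have "X - (X - B) = B"
      using B(2) by blast
    ultimately show ?thesis
      using X B(1) large(1) by (intro bexI[of _ "X - B"]) auto
  qed
qed

lemma signed_measure_diff_Suc_tendsto_zero:
  assumes \<nu>: "signed_measure \<nu>" and Y: "\<And>n. Y n \<in> sets borel" "\<And>n. Y (Suc n) \<subseteq> Y n"
  shows "(\<lambda>n. \<nu> (Y n - Y (Suc n))) \<longlonglongrightarrow> 0"
proof -
  have "(\<lambda>n. Y n - Y (Suc n)) = (\<lambda>n. - Y (Suc n) - - Y n)"
    by auto
  then have "disjoint_family (\<lambda>n. Y n - Y (Suc n))"
    using disjoint_family_Suc[of "\<lambda>n. - Y n"] Y(2) by auto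
  moreover have "range (\<lambda>n. Y n - Y (Suc n)) \<subseteq> sets borel"
    using Y(1) by auto
  ultimately have "(\<lambda>n. \<nu> (Y n - Y (Suc n))) sums \<nu> (\<Union>n. Y n - Y (Suc n))"
    by (intro signed_measure_sums[OF \<nu>])
  then show ?thesis
    using summable_LIMSEQ_zero sums_summable by blast
qed

lemma signed_measure_bounded:
  assumes \<nu>: "signed_measure \<nu>"
  shows "\<exists>K. \<forall>B\<in>sets borel. \<bar>\<nu> B\<bar> \<le> K"
proof (rule ccontr)
  let ?unbounded = "\<lambda>X. X \<in> sets borel \<and> (\<forall>K. \<exists>B\<in>sets borel. B \<subseteq> X \<and> K < \<bar>\<nu> B\<bar>)"
  assume "\<not> ?thesis"
  then have "?unbounded UNIV"
    by (auto simp: not_le)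
  \<comment> \<open>split off disjoint pieces of mass at least 1, keeping an unbounded remainder\<close>
  have "\<exists>Y. \<forall>n. ?unbounded (Y n) \<and> Y (Suc n) \<subseteq> Y n \<and> 1 \<le> \<bar>\<nu> (Y n - Y (Suc n))\<bar>"
  proof (rule dependent_nat_choice)
    show "\<exists>X. ?unbounded X"
      using \<open>?unbounded UNIV\<close> by blast
  next
    fix X :: "real set" and n :: nat
    assume "?unbounded X"
    then obtain Y where "Y \<in> sets borel" "Y \<subseteq> X" "1 \<le> \<bar>\<nu> (X - Y)\<bar>"
      "\<forall>K. \<exists>B\<in>sets borel. B \<subseteq> Y \<and> K < \<bar>\<nu> B\<bar>"
      using signed_measure_unbounded_split[OF \<nu>, of X] by auto
    then show "\<exists>Y. ?unbounded Y \<and> Y \<subseteq> X \<and> 1 \<le> \<bar>\<nu> (X - Y)\<bar>"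
      by auto
  qed
  then obtain Y where Y: "\<And>n. ?unbounded (Y n)"
    and Y_Suc: "\<And>n. Y (Suc n) \<subseteq> Y n" "\<And>n. 1 \<le> \<bar>\<nu> (Y n - Y (Suc n))\<bar>"
    by blast
  have "(\<lambda>n. \<nu> (Y n - Y (Suc n))) \<longlonglongrightarrow> 0"
    using Y Y_Suc(1) by (intro signed_measure_diff_Suc_tendsto_zero[OF \<nu>]) auto
  then have "(\<lambda>n. \<bar>\<nu> (Y n - Y (Suc n))\<bar>) \<longlonglongrightarrow> 0"
    by (rule tendsto_rabs_zero)
  then have "eventually (\<lambda>n. \<bar>\<nu> (Y n - Y (Suc n))\<bar> < 1) sequentially"
    by (rule order_tendstoD) simp
  then obtain n where "\<bar>\<nu> (Y n - Y (Suc n))\<bar> < 1"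
    by (auto simp: eventually_sequentially)
  with Y_Suc(2)[of n] show False
    by simp
qed

definition pos_variation :: "(real set \<Rightarrow> real) \<Rightarrow> real set \<Rightarrow> real" where
  "pos_variation \<nu> A = Sup {\<nu> B | B. B \<in> sets borel \<and> B \<subseteq> A}"

lemma pos_variation_upper:
  assumes \<nu>: "signed_measure \<nu>" and "B \<in> sets borel" "B \<subseteq> A"
  shows "\<nu> B \<le> pos_variation \<nu> A"
proof -
  obtain K where "\<forall>B\<in>sets borel. \<bar>\<nu> B\<bar> \<le> K"
    using signed_measure_bounded[OF \<nu>] by auto
  then have "bdd_above {\<nu> B | B. B \<in> sets borel \<and> B \<subseteq> A}"
    by (auto intro!: bdd_aboveI[of _ K] dest: abs_le_D1)
  then show ?thesis
    unfolding pos_variation_def using assms by (auto intro!: cSup_upper)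
qed

lemma pos_variation_least:
  "(\<And>B. B \<in> sets borel \<Longrightarrow> B \<subseteq> A \<Longrightarrow> \<nu> B \<le> c) \<Longrightarrow> pos_variation \<nu> A \<le> c"
  unfolding pos_variation_def by (auto intro!: cSup_least)

lemma pos_variation_nonneg: "signed_measure \<nu> \<Longrightarrow> 0 \<le> pos_variation \<nu> A"
  using pos_variation_upper[of \<nu> "{}" A] signed_measure_empty[of \<nu>] by auto

lemma pos_variation_ge: "signed_measure \<nu> \<Longrightarrow> A \<in> sets borel \<Longrightarrow> \<nu> A \<le> pos_variation \<nu> A"
  using pos_variation_upper[of \<nu> A A] by auto

lemma pos_variation_empty: "signed_measure \<nu> \<Longrightarrow> pos_variation \<nu> {} = 0"
  using pos_variation_nonneg[of \<nu> "{}"] pos_variation_least[of "{}" \<nu> 0]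
    signed_measure_empty[of \<nu>] by force

lemma pos_variation_mono:
  "signed_measure \<nu> \<Longrightarrow> A \<subseteq> A' \<Longrightarrow> pos_variation \<nu> A \<le> pos_variation \<nu> A'"
  by (rule pos_variation_least) (auto intro: pos_variation_upper)

lemma pos_variation_Un:
  assumes \<nu>: "signed_measure \<nu>" and A: "A \<in> sets borel" "A' \<in> sets borel" "A \<inter> A' = {}"
  shows "pos_variation \<nu> (A \<union> A') = pos_variation \<nu> A + pos_variation \<nu> A'"
proof (rule antisym)
  show "pos_variation \<nu> (A \<union> A') \<le> pos_variation \<nu> A + pos_variation \<nu> A'"
  proof (rule pos_variation_least)
    fix B assume B: "B \<in> sets borel" "B \<subseteq> A \<union> A'"
    have "\<nu> B = \<nu> (B \<inter> A) + \<nu> (B \<inter> A')"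
      using signed_measure_Un[OF \<nu>, of "B \<inter> A" "B \<inter> A'"] A B by (auto simp: Int_Un_distrib[symmetric] Int_absorb2)
    moreover have "\<nu> (B \<inter> A) \<le> pos_variation \<nu> A" "\<nu> (B \<inter> A') \<le> pos_variation \<nu> A'"
      using A B by (auto intro!: pos_variation_upper[OF \<nu>])
    ultimately show "\<nu> B \<le> pos_variation \<nu> A + pos_variation \<nu> A'" by linarith
  qed
next
  have "pos_variation \<nu> A \<le> pos_variation \<nu> (A \<union> A') - \<nu> B'"
    if B': "B' \<in> sets borel" "B' \<subseteq> A'" for B'
  proof (rule pos_variation_least)
    fix B assume B: "B \<in> sets borel" "B \<subseteq> A"
    have "\<nu> (B \<union> B') = \<nu> B + \<nu> B'"
      using signed_measure_Un[OF \<nu>] A B B' by blast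
    moreover have "\<nu> (B \<union> B') \<le> pos_variation \<nu> (A \<union> A')"
      using B B' by (intro pos_variation_upper[OF \<nu>]) auto
    ultimately show "\<nu> B \<le> pos_variation \<nu> (A \<union> A') - \<nu> B'" by linarith
  qed
  then have "pos_variation \<nu> A' \<le> pos_variation \<nu> (A \<union> A') - pos_variation \<nu> A"
    by (intro pos_variation_least) (simp add: algebra_simps)
  then show "pos_variation \<nu> A + pos_variation \<nu> A' \<le> pos_variation \<nu> (A \<union> A')" by linarith
qed

lemma pos_variation_sums:
  assumes \<nu>: "signed_measure \<nu>" and A: "range A \<subseteq> sets borel" "disjoint_family A"
  shows "(\<lambda>n. pos_variation \<nu> (A n)) sums pos_variation \<nu> (\<Union>n. A n)"
proof -
  have partial_sums: "(\<Sum>i<n. pos_variation \<nu> (A i)) = pos_variation \<nu> (\<Union>i<n. A i)" for n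
  proof (induction n)
    case (Suc n)
    have "A i \<inter> A n = {}" if "i < n" for i
      using A(2) that by (simp add: disjoint_family_on_def)
    then have "(\<Union>i<n. A i) \<inter> A n = {}"
      by blast
    moreover have "(\<Union>i<n. A i) \<in> sets borel" "A n \<in> sets borel"
      using A(1) by auto
    moreover have "(\<Union>i<Suc n. A i) = (\<Union>i<n. A i) \<union> A n"
      by (auto simp: lessThan_Suc)
    ultimately show ?case
      using Suc pos_variation_Un[OF \<nu>, of "\<Union>i<n. A i" "A n"] by simp
  qed (simp add: pos_variation_empty[OF \<nu>])
  have le: "(\<Sum>i<n. pos_variation \<nu> (A i)) \<le> pos_variation \<nu> (\<Union>n. A n)" for n
    unfolding partial_sums by (rule pos_variation_mono[OF \<nu>]) auto
  have summable: "summable (\<lambda>n. pos_variation \<nu> (A n))"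
    using le pos_variation_nonneg[OF \<nu>] by (intro summableI_nonneg_bounded) auto
  have "pos_variation \<nu> (\<Union>n. A n) \<le> (\<Sum>n. pos_variation \<nu> (A n))"
  proof (rule pos_variation_least)
    fix B assume B: "B \<in> sets borel" "B \<subseteq> (\<Union>n. A n)"
    have "(\<lambda>n. \<nu> (B \<inter> A n)) sums \<nu> (\<Union>n. B \<inter> A n)"
      using A B by (intro signed_measure_sums[OF \<nu>]) (auto simp: disjoint_family_on_def)
    moreover have "(\<Union>n. B \<inter> A n) = B"
      using B by auto
    ultimately have sums_B: "(\<lambda>n. \<nu> (B \<inter> A n)) sums \<nu> B"
      by simp
    have "\<nu> (B \<inter> A n) \<le> pos_variation \<nu> (A n)" for n
      using A B by (intro pos_variation_upper[OF \<nu>]) auto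
    then show "\<nu> B \<le> (\<Sum>n. pos_variation \<nu> (A n))"
      using sums_B summable_sums[OF summable] by (rule sums_le)
  qed
  moreover have "(\<Sum>n. pos_variation \<nu> (A n)) \<le> pos_variation \<nu> (\<Union>n. A n)"
    using summable le by (rule suminf_le_const)
  ultimately have "pos_variation \<nu> (\<Union>n. A n) = (\<Sum>n. pos_variation \<nu> (A n))"
    by (rule antisym)
  then show ?thesis
    using summable_sums[OF summable] by simp
qed

lemma finite_measure_of_countably_additive:
  fixes G :: "'a set \<Rightarrow> real"
  assumes nonneg: "\<And>A. A \<in> sets \<Omega> \<Longrightarrow> 0 \<le> G A" and "G {} = 0"
    and sums: "\<And>A. range A \<subseteq> sets \<Omega> \<Longrightarrow> disjoint_family A \<Longrightarrow> (\<lambda>n. G (A n)) sums G (\<Union>n. A n)"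
  shows "\<exists>M. sets M = sets \<Omega> \<and> finite_measure M \<and> (\<forall>A\<in>sets \<Omega>. measure M A = G A)"
proof -
  define M where "M = measure_of (space \<Omega>) (sets \<Omega>) (\<lambda>A. ennreal (G A))"
  have "countably_additive (sets \<Omega>) (\<lambda>A. ennreal (G A))"
    unfolding countably_additive_def
  proof (intro allI impI)
    fix A :: "nat \<Rightarrow> 'a set" assume A: "range A \<subseteq> sets \<Omega>" "disjoint_family A"
    then have "(\<lambda>n. G (A n)) sums G (\<Union>n. A n)" by (rule sums)
    with A nonneg show "(\<Sum>n. ennreal (G (A n))) = ennreal (G (\<Union>n. A n))"
      by (subst suminf_ennreal2) (auto simp: sums_iff)
  qed
  then have emeasure_M: "emeasure M A = ennreal (G A)" if "A \<in> sets \<Omega>" for A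
    unfolding M_def using that \<open>G {} = 0\<close>
    by (intro emeasure_measure_of_sigma) (auto simp: positive_def sets.sigma_algebra_axioms)
  have "sets M = sets \<Omega>"
    unfolding M_def by simp
  moreover have "finite_measure M"
    using emeasure_M[of "space \<Omega>"] by (intro finite_measureI) (simp add: M_def)
  moreover have "measure M A = G A" if "A \<in> sets \<Omega>" for A
    using emeasure_M[OF that] nonneg[OF that] by (simp add: measure_def)
  ultimately show ?thesis by blast
qed

lemma signed_measure_Jordan_decomposition:
  assumes \<nu>: "signed_measure \<nu>"
  obtains P N where "finite_measure P" "sets P = sets borel" "finite_measure N" "sets N = sets borel"
    "\<And>A. A \<in> sets borel \<Longrightarrow> \<nu> A = measure P A - measure N A"
proof -
  obtain P where P: "sets P = sets borel" "finite_measure P"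
    "\<forall>A\<in>sets borel. measure P A = pos_variation \<nu> A"
    using finite_measure_of_countably_additive[of borel "pos_variation \<nu>"]
      pos_variation_nonneg[OF \<nu>] pos_variation_empty[OF \<nu>] pos_variation_sums[OF \<nu>] by blast
  obtain N where N: "sets N = sets borel" "finite_measure N"
    "\<forall>A\<in>sets borel. measure N A = pos_variation \<nu> A - \<nu> A"
    using finite_measure_of_countably_additive[of borel "\<lambda>A. pos_variation \<nu> A - \<nu> A"]
      pos_variation_ge[OF \<nu>] pos_variation_empty[OF \<nu>] signed_measure_empty[OF \<nu>]
      sums_diff[OF pos_variation_sums[OF \<nu>] signed_measure_sums[OF \<nu>]] by force
  show ?thesis using P N by (intro that[of P N]) auto
qed

lemma signed_measure_measure_diff:
  assumes "finite_measure P" "sets P = sets borel" "finite_measure N" "sets N = sets borel"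
  shows "signed_measure (\<lambda>A. if A \<in> sets borel then measure P A - measure N A else 0)"
  unfolding signed_measure_def
proof (intro conjI allI impI)
  fix A :: "nat \<Rightarrow> real set" assume A: "range A \<subseteq> sets borel" "disjoint_family A"
  then have "(\<lambda>n. measure P (A n)) sums measure P (\<Union>n. A n)"
    "(\<lambda>n. measure N (A n)) sums measure N (\<Union>n. A n)"
    using assms by (auto intro!: finite_measure.finite_measure_UNION)
  then show "(\<lambda>n. if A n \<in> sets borel then measure P (A n) - measure N (A n) else 0) sums
      (if (\<Union>n. A n) \<in> sets borel then measure P (\<Union>n. A n) - measure N (\<Union>n. A n) else 0)"
    using A by (auto intro: sums_diff)
qed auto

section \<open>Total variation\<close>

lemma sum_abs_le_Jordan_decomposition:
  fixes n :: nat
  assumes P: "finite_measure P" "sets P = sets borel" and N: "finite_measure N" "sets N = sets borel"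
    and \<nu>: "\<And>A. A \<in> sets borel \<Longrightarrow> \<nu> A = measure P A - measure N A"
    and A: "\<forall>i<n. A i \<in> sets borel" "disjoint_family_on A {..<n}"
  shows "(\<Sum>i<n. \<bar>\<nu> (A i)\<bar>) \<le> measure P UNIV + measure N UNIV"
proof -
  interpret P: finite_measure P by fact
  interpret N: finite_measure N by fact
  have "(\<Sum>i<n. \<bar>\<nu> (A i)\<bar>) \<le> (\<Sum>i<n. measure P (A i) + measure N (A i))"
    using A(1) by (intro sum_mono) (simp add: \<nu> abs_le_iff)
  also have "\<dots> = measure P (\<Union>i<n. A i) + measure N (\<Union>i<n. A i)"
    using A P(2) N(2)
    by (simp add: sum.distrib P.finite_measure_finite_Union N.finite_measure_finite_Union image_subset_iff)
  also have "\<dots> \<le> measure P UNIV + measure N UNIV"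
    using P(2) N(2) by (intro add_mono P.finite_measure_mono N.finite_measure_mono) auto
  finally show ?thesis .
qed

lemma tv_norm_upper:
  fixes n :: nat
  assumes \<nu>: "signed_measure \<nu>" and A: "\<forall>i<n. A i \<in> sets borel" "disjoint_family_on A {..<n}"
  shows "(\<Sum>i<n. \<bar>\<nu> (A i)\<bar>) \<le> tv_norm \<nu>"
proof -
  obtain P N where P: "finite_measure P" "sets P = sets borel" and N: "finite_measure N" "sets N = sets borel"
    and PN: "\<And>A. A \<in> sets borel \<Longrightarrow> \<nu> A = measure P A - measure N A"
    using signed_measure_Jordan_decomposition[OF \<nu>] by blast
  have "bdd_above {(\<Sum>i<n. \<bar>\<nu> (A i)\<bar>) | (n::nat) A.
      (\<forall>i<n. A i \<in> sets borel) \<and> disjoint_family_on A {..<n}}"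
    using sum_abs_le_Jordan_decomposition[OF P N PN]
    by (intro bdd_aboveI[of _ "measure P UNIV + measure N UNIV"]) auto
  then show ?thesis
    unfolding tv_norm_def using A by (intro cSup_upper) auto
qed

lemma tv_norm_least:
  assumes "\<And>(n::nat) A. \<forall>i<n. A i \<in> sets borel \<Longrightarrow> disjoint_family_on A {..<n} \<Longrightarrow>
    (\<Sum>i<n. \<bar>\<nu> (A i)\<bar>) \<le> C"
  shows "tv_norm \<nu> \<le> C"
proof -
  have "0 \<in> {(\<Sum>i<n. \<bar>\<nu> (A i)\<bar>) | (n::nat) A.
      (\<forall>i<n. A i \<in> sets borel) \<and> disjoint_family_on A {..<n}}"
    by (intro CollectI exI[of _ "0::nat"]) (auto simp: disjoint_family_on_def)
  then show ?thesis
    unfolding tv_norm_def using assms by (intro cSup_least) auto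
qed

lemma abs_le_tv_norm:
  assumes \<nu>: "signed_measure \<nu>"
  shows "\<bar>\<nu> B\<bar> \<le> tv_norm \<nu>"
proof -
  have "(\<Sum>i<(1::nat). \<bar>\<nu> (if B \<in> sets borel then B else {})\<bar>) \<le> tv_norm \<nu>"
    by (rule tv_norm_upper[OF \<nu>]) (auto simp: disjoint_family_on_def)
  then show ?thesis
    using signed_measure_notin_sets[OF \<nu>] signed_measure_empty[OF \<nu>] by (auto split: if_splits)
qed

lemma tv_norm_diff_le:
  assumes "signed_measure \<nu>" "signed_measure \<mu>"
  shows "tv_norm (\<lambda>A. \<nu> A - \<mu> A) \<le> tv_norm \<nu> + tv_norm \<mu>"
proof (rule tv_norm_least)
  fix n and A :: "nat \<Rightarrow> real set"
  assume A: "\<forall>i<n. A i \<in> sets borel" "disjoint_family_on A {..<n}"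
  have "(\<Sum>i<n. \<bar>\<nu> (A i) - \<mu> (A i)\<bar>) \<le> (\<Sum>i<n. \<bar>\<nu> (A i)\<bar>) + (\<Sum>i<n. \<bar>\<mu> (A i)\<bar>)"
    by (simp add: sum.distrib[symmetric] sum_mono abs_triangle_ineq4)
  also have "\<dots> \<le> tv_norm \<nu> + tv_norm \<mu>"
    using tv_norm_upper[OF assms(1) A] tv_norm_upper[OF assms(2) A] by (rule add_mono)
  finally show "(\<Sum>i<n. \<bar>\<nu> (A i) - \<mu> (A i)\<bar>) \<le> tv_norm \<nu> + tv_norm \<mu>" .
qed

section \<open>Convolution of a finite measure with a signed measure\<close>

lemma translate_in_borel: "A \<in> sets borel \<Longrightarrow> {x::real. x + y \<in> A} \<in> sets borel"
  using measurable_sets[of "\<lambda>x::real. x + y" borel borel A] by (simp add: vimage_def)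

lemma measurable_emeasure_translate:
  fixes P :: "real measure"
  assumes P: "finite_measure P" "sets P = sets borel" and A: "A \<in> sets borel"
  shows "(\<lambda>y. emeasure P {x. x + y \<in> A}) \<in> borel_measurable borel"
proof -
  interpret P: finite_measure P by fact
  have "(\<lambda>p::real \<times> real. snd p + fst p) \<in> borel_measurable (borel \<Otimes>\<^sub>M P)"
    by (simp add: measurable_cong_sets[OF sets_pair_measure_cong[OF refl P(2)] refl])
  from measurable_sets[OF this A]
  have "(\<lambda>y. emeasure P (Pair y -` ((\<lambda>p. snd p + fst p) -` A \<inter> space (borel \<Otimes>\<^sub>M P))))
      \<in> borel_measurable borel"
    by (rule P.measurable_emeasure_Pair)
  moreover have "Pair y -` ((\<lambda>p. snd p + fst p) -` A \<inter> space (borel \<Otimes>\<^sub>M P)) = {x. x + y \<in> A}" for y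
    using sets_eq_imp_space_eq[OF P(2)] by (auto simp: space_pair_measure)
  ultimately show ?thesis by simp
qed

lemma measurable_measure_translate:
  fixes P :: "real measure"
  assumes "finite_measure P" "sets P = sets borel" "A \<in> sets borel"
  shows "(\<lambda>y. measure P {x. x + y \<in> A}) \<in> borel_measurable borel"
  using measurable_emeasure_translate[OF assms] unfolding measure_def by simp

lemma measurable_signed_measure_translate:
  assumes \<nu>: "signed_measure \<nu>" and A: "A \<in> sets borel"
  shows "(\<lambda>y. \<nu> {x. x + y \<in> A}) \<in> borel_measurable borel"
proof -
  obtain P N where P: "finite_measure P" "sets P = sets borel" and N: "finite_measure N" "sets N = sets borel"
    and PN: "\<And>A. A \<in> sets borel \<Longrightarrow> \<nu> A = measure P A - measure N A"
    using signed_measure_Jordan_decomposition[OF \<nu>] by blast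
  have "(\<lambda>y. measure P {x. x + y \<in> A} - measure N {x. x + y \<in> A}) \<in> borel_measurable borel"
    using measurable_measure_translate[OF P A] measurable_measure_translate[OF N A] by simp
  then show ?thesis
    by (simp add: PN translate_in_borel[OF A])
qed

lemma integrable_signed_measure_translate:
  fixes M :: "real measure"
  assumes \<nu>: "signed_measure \<nu>" and A: "A \<in> sets borel" and M: "finite_measure M" "sets M = sets borel"
  shows "integrable M (\<lambda>y. \<nu> {x. x + y \<in> A})"
proof -
  interpret M: finite_measure M by fact
  show ?thesis
    by (rule M.integrable_const_bound[where B="tv_norm \<nu>"])
      (use abs_le_tv_norm[OF \<nu>] measurable_signed_measure_translate[OF \<nu> A]
        measurable_cong_sets[OF M(2) refl] in auto)
qed

lemma nn_integral_measure_add: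
  assumes sets: "sets N\<^sub>1 = sets M" "sets N\<^sub>2 = sets M"
    and add: "\<And>A. A \<in> sets M \<Longrightarrow> emeasure M A = emeasure N\<^sub>1 A + emeasure N\<^sub>2 A"
    and f: "f \<in> borel_measurable M"
  shows "(\<integral>\<^sup>+x. f x \<partial>M) = (\<integral>\<^sup>+x. f x \<partial>N\<^sub>1) + (\<integral>\<^sup>+x. f x \<partial>N\<^sub>2)"
  using f
proof (induct rule: borel_measurable_induct)
  case (cong f g)
  have "space N\<^sub>1 = space M" "space N\<^sub>2 = space M"
    using sets sets_eq_imp_space_eq by metis+
  with cong show ?case
    by (metis (no_types, lifting) nn_integral_cong)
next
  case (set A)
  then show ?case using add sets by simp
next
  case (mult u c)
  have "u \<in> borel_measurable N\<^sub>1" "u \<in> borel_measurable N\<^sub>2"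
    using mult(2) measurable_cong_sets[OF sets(1) refl] measurable_cong_sets[OF sets(2) refl] by auto
  with mult show ?case
    by (simp add: nn_integral_cmult distrib_left)
next
  case (add u v)
  have "u \<in> borel_measurable N\<^sub>1" "u \<in> borel_measurable N\<^sub>2"
    "v \<in> borel_measurable N\<^sub>1" "v \<in> borel_measurable N\<^sub>2"
    using add(1,4) measurable_cong_sets[OF sets(1) refl] measurable_cong_sets[OF sets(2) refl] by auto
  with add show ?case
    by (simp add: nn_integral_add ac_simps)
next
  case (seq U)
  have U: "U i \<in> borel_measurable N\<^sub>1" "U i \<in> borel_measurable N\<^sub>2" for i
    by (subst measurable_cong_sets[OF sets(1) refl] measurable_cong_sets[OF sets(2) refl], rule seq(1))+
  have "(\<integral>\<^sup>+x. (SUP i. U i) x \<partial>M) = (SUP i. (\<integral>\<^sup>+x. U i x \<partial>N\<^sub>1) + (\<integral>\<^sup>+x. U i x \<partial>N\<^sub>2))"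
    unfolding SUP_apply using seq by (simp add: nn_integral_monotone_convergence_SUP)
  also have "\<dots> = (SUP i. \<integral>\<^sup>+x. U i x \<partial>N\<^sub>1) + (SUP i. \<integral>\<^sup>+x. U i x \<partial>N\<^sub>2)"
    using seq(4) by (intro ennreal_SUP_add) (auto intro: incseq_nn_integral)
  also have "\<dots> = (\<integral>\<^sup>+x. (SUP i. U i) x \<partial>N\<^sub>1) + (\<integral>\<^sup>+x. (SUP i. U i) x \<partial>N\<^sub>2)"
    unfolding SUP_apply using seq(4) U by (simp add: nn_integral_monotone_convergence_SUP)
  finally show ?case .
qed

lemma integral_measure_add:
  fixes f :: "'a \<Rightarrow> real"
  assumes sets: "sets N\<^sub>1 = sets M" "sets N\<^sub>2 = sets M"
    and add: "\<And>A. A \<in> sets M \<Longrightarrow> emeasure M A = emeasure N\<^sub>1 A + emeasure N\<^sub>2 A"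
    and f: "integrable M f"
  shows "integrable N\<^sub>1 f" "integrable N\<^sub>2 f" "(\<integral>x. f x \<partial>M) = (\<integral>x. f x \<partial>N\<^sub>1) + (\<integral>x. f x \<partial>N\<^sub>2)"
proof -
  have "f \<in> borel_measurable M"
    using f by auto
  then have f_meas: "f \<in> borel_measurable M" "f \<in> borel_measurable N\<^sub>1" "f \<in> borel_measurable N\<^sub>2"
    using measurable_cong_sets[OF sets(1) refl] measurable_cong_sets[OF sets(2) refl] by auto
  note split = nn_integral_measure_add[OF sets add]
  have "(\<integral>\<^sup>+x. ennreal (norm (f x)) \<partial>M) < \<infinity>"
    using f by (simp add: integrable_iff_bounded)
  then show int: "integrable N\<^sub>1 f" "integrable N\<^sub>2 f"
    using f_meas split[of "\<lambda>x. ennreal (norm (f x))"] by (auto simp: integrable_iff_bounded top_unique)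
  then have "(\<integral>\<^sup>+x. ennreal (f x) \<partial>N\<^sub>1) \<noteq> \<infinity>" "(\<integral>\<^sup>+x. ennreal (f x) \<partial>N\<^sub>2) \<noteq> \<infinity>"
    "(\<integral>\<^sup>+x. ennreal (- f x) \<partial>N\<^sub>1) \<noteq> \<infinity>" "(\<integral>\<^sup>+x. ennreal (- f x) \<partial>N\<^sub>2) \<noteq> \<infinity>"
    by (auto simp: real_integrable_def)
  then show "(\<integral>x. f x \<partial>M) = (\<integral>x. f x \<partial>N\<^sub>1) + (\<integral>x. f x \<partial>N\<^sub>2)"
    unfolding real_lebesgue_integral_def[OF f] real_lebesgue_integral_def[OF int(1)]
      real_lebesgue_integral_def[OF int(2)]
    using f_meas(1) by (simp add: split enn2real_plus top.not_eq_extremum)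
qed

lemma integral_convolution:
  fixes g :: "real \<Rightarrow> real"
  assumes M: "finite_measure M" "sets M = sets borel" and N: "finite_measure N" "sets N = sets borel"
    and g: "g \<in> borel_measurable borel" "integrable (M \<star> N) g"
  shows "(\<integral>w. g w \<partial>(M \<star> N)) = (\<integral>x. (\<integral>y. g (x + y) \<partial>N) \<partial>M)"
proof -
  interpret M: finite_measure M by fact
  interpret N: finite_measure N by fact
  interpret pair_sigma_finite M N ..
  have add_meas: "(\<lambda>p. fst p + snd p) \<in> measurable (M \<Otimes>\<^sub>M N) borel"
    by (simp add: measurable_cong_sets[OF sets_pair_measure_cong[OF M(2) N(2)] refl])
  have add_eq: "(\<lambda>(x, y). x + y) = (\<lambda>p. fst p + snd p)"
    by auto
  have "integrable (M \<Otimes>\<^sub>M N) (\<lambda>p. g (fst p + snd p))"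
    using g(2) unfolding convolution_def add_eq by (subst (asm) integrable_distr_eq[OF add_meas g(1)])
  moreover have "(\<integral>w. g w \<partial>(M \<star> N)) = (\<integral>p. g (fst p + snd p) \<partial>(M \<Otimes>\<^sub>M N))"
    unfolding convolution_def add_eq by (rule integral_distr[OF add_meas g(1)])
  ultimately show ?thesis
    using integral_fst'[of "\<lambda>p. g (fst p + snd p)"] by simp
qed

lemma measure_convolution:
  fixes M P :: "real measure"
  assumes M: "finite_measure M" "sets M = sets borel" and P: "finite_measure P" "sets P = sets borel"
    and A: "A \<in> sets borel"
  shows "measure (M \<star> P) A = (\<integral>y. measure P {x. x + y \<in> A} \<partial>M)"
proof -
  interpret M: finite_measure M by fact
  interpret P: finite_measure P by fact
  have space: "space M = UNIV" "space P = UNIV"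
    using sets_eq_imp_space_eq[OF M(2)] sets_eq_imp_space_eq[OF P(2)] by simp_all
  have int: "integrable M (\<lambda>y. measure P {x. x + y \<in> A})"
    using measurable_measure_translate[OF P A] measurable_cong_sets[OF M(2) refl] P.bounded_measure
    by (intro M.integrable_const_bound[where B="measure P UNIV"]) (auto simp: space)
  have "emeasure (M \<star> P) A = (\<integral>\<^sup>+y. ennreal (measure P {x. x + y \<in> A}) \<partial>M)"
    using A M P by (subst convolution_emeasure) (auto simp: space P.emeasure_eq_measure)
  also have "\<dots> = ennreal (\<integral>y. measure P {x. x + y \<in> A} \<partial>M)"
    by (rule nn_integral_eq_integral[OF int]) simp
  finally show ?thesis
    unfolding measure_def by simp
qed

lemma signed_measure_conv_sm:
  fixes K :: "real measure"
  assumes K: "finite_measure K" "sets K = sets borel" and \<nu>: "signed_measure \<nu>"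
  shows "signed_measure (conv_sm K \<nu>)"
proof -
  interpret K: finite_measure K by fact
  obtain P N where P: "finite_measure P" "sets P = sets borel" and N: "finite_measure N" "sets N = sets borel"
    and PN: "\<And>A. A \<in> sets borel \<Longrightarrow> \<nu> A = measure P A - measure N A"
    using signed_measure_Jordan_decomposition[OF \<nu>] by blast
  have int: "integrable K (\<lambda>y. measure Q {x. x + y \<in> A})"
    if "finite_measure Q" "sets Q = sets borel" "A \<in> sets borel" for Q A
    using measurable_measure_translate[OF that] measurable_cong_sets[OF K(2) refl]
      finite_measure.bounded_measure[OF that(1)] sets_eq_imp_space_eq[OF that(2)]
    by (intro K.integrable_const_bound[where B="measure Q UNIV"]) auto
  have "conv_sm K \<nu> A = measure (K \<star> P) A - measure (K \<star> N) A" if A: "A \<in> sets borel" for A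
    using A K P N int[OF P A] int[OF N A]
    by (simp add: conv_sm_def PN translate_in_borel measure_convolution)
  then have "conv_sm K \<nu> = (\<lambda>A. if A \<in> sets borel then measure (K \<star> P) A - measure (K \<star> N) A else 0)"
    by (auto simp: conv_sm_def)
  then show ?thesis
    using signed_measure_measure_diff[of "K \<star> P" "K \<star> N"]
      convolution_finite[OF K(1) P(1) P(2) K(2)] convolution_finite[OF K(1) N(1) N(2) K(2)] by simp
qed

lemma tv_norm_conv_sm_le:
  fixes K :: "real measure"
  assumes K: "finite_measure K" "sets K = sets borel" and \<nu>: "signed_measure \<nu>"
  shows "tv_norm (conv_sm K \<nu>) \<le> measure K UNIV * tv_norm \<nu>"
proof (rule tv_norm_least)
  interpret K: finite_measure K by fact
  fix n :: nat and A :: "nat \<Rightarrow> real set"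
  assume A: "\<forall>i<n. A i \<in> sets borel" "disjoint_family_on A {..<n}"
  have int: "integrable K (\<lambda>y. \<nu> {x. x + y \<in> A i})" if "i \<in> {..<n}" for i
    using integrable_signed_measure_translate[OF \<nu> _ K] A that by auto
  have translates: "\<forall>i<n. {x. x + y \<in> A i} \<in> sets borel"
    "disjoint_family_on (\<lambda>i. {x. x + y \<in> A i}) {..<n}" for y
    using A translate_in_borel unfolding disjoint_family_on_def by auto
  have "(\<Sum>i<n. \<bar>conv_sm K \<nu> (A i)\<bar>) = (\<Sum>i<n. \<bar>\<integral>y. \<nu> {x. x + y \<in> A i} \<partial>K\<bar>)"
    using A by (intro sum.cong) (auto simp: conv_sm_def)
  also have "\<dots> \<le> (\<Sum>i<n. \<integral>y. \<bar>\<nu> {x. x + y \<in> A i}\<bar> \<partial>K)"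
    by (intro sum_mono integral_abs_bound)
  also have "\<dots> = (\<integral>y. (\<Sum>i<n. \<bar>\<nu> {x. x + y \<in> A i}\<bar>) \<partial>K)"
    using int by (intro Bochner_Integration.integral_sum[symmetric]) auto
  also have "\<dots> \<le> (\<integral>y. tv_norm \<nu> \<partial>K)"
    using int tv_norm_upper[OF \<nu> translates] by (intro integral_mono) auto
  also have "\<dots> = measure K UNIV * tv_norm \<nu>"
    using sets_eq_imp_space_eq[OF K(2)] by simp
  finally show "(\<Sum>i<n. \<bar>conv_sm K \<nu> (A i)\<bar>) \<le> measure K UNIV * tv_norm \<nu>" .
qed

lemma conv_sm_linear:
  fixes K :: "real measure"
  assumes K: "finite_measure K" "sets K = sets borel" and "signed_measure \<nu>" "signed_measure \<mu>"
  shows "conv_sm K (\<lambda>A. a * \<nu> A + b * \<mu> A) = (\<lambda>A. a * conv_sm K \<nu> A + b * conv_sm K \<mu> A)"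
  using integrable_signed_measure_translate[OF assms(3) _ K] integrable_signed_measure_translate[OF assms(4) _ K]
  by (auto simp: conv_sm_def)

lemma conv_sm_diff:
  fixes K :: "real measure"
  assumes "finite_measure K" "sets K = sets borel" "signed_measure \<nu>" "signed_measure \<mu>"
  shows "conv_sm K (\<lambda>A. \<nu> A - \<mu> A) = (\<lambda>A. conv_sm K \<nu> A - conv_sm K \<mu> A)"
  using conv_sm_linear[OF assms, of 1 "-1"] by simp

lemma conv_sm_convolution:
  fixes M K :: "real measure"
  assumes M: "finite_measure M" "sets M = sets borel" and K: "finite_measure K" "sets K = sets borel"
    and \<nu>: "signed_measure \<nu>"
  shows "conv_sm M (conv_sm K \<nu>) = conv_sm (M \<star> K) \<nu>"
proof
  fix A :: "real set"
  show "conv_sm M (conv_sm K \<nu>) A = conv_sm (M \<star> K) \<nu> A"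
  proof (cases "A \<in> sets borel")
    case True
    define g where "g w = \<nu> {x. x + w \<in> A}" for w
    have translate: "{x. x + z + y \<in> A} = {x. x + (y + z) \<in> A}" for y z
      by (simp add: ac_simps)
    have "conv_sm M (conv_sm K \<nu>) A = (\<integral>y. (\<integral>z. g (y + z) \<partial>K) \<partial>M)"
      using True by (simp add: conv_sm_def g_def translate translate_in_borel)
    also have "\<dots> = (\<integral>w. g w \<partial>(M \<star> K))"
      unfolding g_def using convolution_finite[OF M(1) K(1) K(2) M(2)]
      by (intro integral_convolution[symmetric] M K measurable_signed_measure_translate
          integrable_signed_measure_translate \<nu> True) auto
    also have "\<dots> = conv_sm (M \<star> K) \<nu> A"
      using True by (simp add: conv_sm_def g_def)
    finally show ?thesis .
  qed (simp add: conv_sm_def)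
qed

lemma conv_sm_return:
  assumes \<nu>: "signed_measure \<nu>"
  shows "conv_sm (return borel 0) \<nu> = \<nu>"
  using measurable_signed_measure_translate[OF \<nu>] signed_measure_notin_sets[OF \<nu>]
  by (auto simp: conv_sm_def integral_return)

lemma conv_sm_measure_add:
  fixes M N\<^sub>1 N\<^sub>2 :: "real measure"
  assumes M: "finite_measure M" "sets M = sets borel" and sets: "sets N\<^sub>1 = sets borel" "sets N\<^sub>2 = sets borel"
    and add: "\<And>A. A \<in> sets borel \<Longrightarrow> emeasure M A = emeasure N\<^sub>1 A + emeasure N\<^sub>2 A"
    and \<nu>: "signed_measure \<nu>"
  shows "conv_sm M \<nu> A = conv_sm N\<^sub>1 \<nu> A + conv_sm N\<^sub>2 \<nu> A"
  using integral_measure_add(3)[of N\<^sub>1 M N\<^sub>2, OF _ _ _ integrable_signed_measure_translate[OF \<nu> _ M]]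
    sets M(2) add by (simp add: conv_sm_def)

section \<open>Convolution of a finite measure with an integrable function\<close>

lemma measurable_reflect_shift:
  "f \<in> borel_measurable borel \<Longrightarrow> (\<lambda>z. f (x - z :: real)) \<in> borel_measurable borel"
  by (rule measurable_compose[of "\<lambda>z. x - z" borel borel f borel]) simp_all

lemma measurable_pair_diff:
  fixes K :: "real measure" and h :: "real \<Rightarrow> 'b::topological_space"
  assumes "sets K = sets borel" and "h \<in> borel_measurable borel"
  shows "(\<lambda>p. h (fst p - snd p)) \<in> borel_measurable (lborel \<Otimes>\<^sub>M K)"
  unfolding measurable_cong_sets[OF sets_pair_measure_cong[OF sets_lborel assms(1)] refl]
  using assms(2) by measurable

lemma measurable_nn_integral_shift:
  fixes K :: "real measure" and h :: "real \<Rightarrow> ennreal"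
  assumes K: "finite_measure K" "sets K = sets borel" and h: "h \<in> borel_measurable borel"
  shows "(\<lambda>x. \<integral>\<^sup>+z. h (x - z) \<partial>K) \<in> borel_measurable lborel"
proof -
  interpret K: finite_measure K by fact
  show ?thesis
    using K.borel_measurable_nn_integral[of "\<lambda>x z. h (x - z)" lborel] measurable_pair_diff[OF K(2) h]
    by (simp add: split_beta')
qed

lemma nn_integral_shift_convolution:
  fixes K :: "real measure" and h :: "real \<Rightarrow> ennreal"
  assumes K: "finite_measure K" "sets K = sets borel" and h: "h \<in> borel_measurable borel"
  shows "(\<integral>\<^sup>+x. (\<integral>\<^sup>+z. h (x - z) \<partial>K) \<partial>lborel) = emeasure K UNIV * (\<integral>\<^sup>+x. h x \<partial>lborel)"
proof -
  interpret K: finite_measure K by fact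
  interpret pair_sigma_finite lborel K ..
  have "(\<integral>\<^sup>+x. (\<integral>\<^sup>+z. h (x - z) \<partial>K) \<partial>lborel) = (\<integral>\<^sup>+z. (\<integral>\<^sup>+x. h (x - z) \<partial>lborel) \<partial>K)"
    using Fubini[OF measurable_pair_diff[OF K(2) h]] by simp
  also have "\<dots> = (\<integral>\<^sup>+z. (\<integral>\<^sup>+x. h x \<partial>lborel) \<partial>K)"
  proof (rule nn_integral_cong)
    fix z
    show "(\<integral>\<^sup>+x. h (x - z) \<partial>lborel) = (\<integral>\<^sup>+x. h x \<partial>lborel)"
      using nn_integral_real_affine[OF h, of 1 "- z"] by simp
  qed
  also have "\<dots> = emeasure K UNIV * (\<integral>\<^sup>+x. h x \<partial>lborel)"
    using sets_eq_imp_space_eq[OF K(2)] by (simp add: mult.commute)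
  finally show ?thesis .
qed

lemma AE_integrable_shift:
  fixes K :: "real measure" and f :: "real \<Rightarrow> real"
  assumes K: "finite_measure K" "sets K = sets borel" and f: "integrable lborel f"
  shows "AE x in lborel. integrable K (\<lambda>z. f (x - z))"
proof -
  interpret K: finite_measure K by fact
  have f_meas: "f \<in> borel_measurable borel"
    using f by auto
  have norm_meas: "(\<lambda>x. ennreal \<bar>f x\<bar>) \<in> borel_measurable borel"
    using f_meas by simp
  have "(\<integral>\<^sup>+x. (\<integral>\<^sup>+z. ennreal \<bar>f (x - z)\<bar> \<partial>K) \<partial>lborel) = emeasure K UNIV * (\<integral>\<^sup>+x. ennreal \<bar>f x\<bar> \<partial>lborel)"
    by (rule nn_integral_shift_convolution[OF K norm_meas])
  also have "\<dots> < \<infinity>"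
    using f by (simp add: integrable_iff_bounded K.emeasure_eq_measure ennreal_mult_less_top)
  finally have "(\<integral>\<^sup>+x. (\<integral>\<^sup>+z. ennreal \<bar>f (x - z)\<bar> \<partial>K) \<partial>lborel) < \<infinity>" .
  then have "AE x in lborel. (\<integral>\<^sup>+z. ennreal \<bar>f (x - z)\<bar> \<partial>K) \<noteq> \<infinity>"
    by (intro nn_integral_PInf_AE measurable_nn_integral_shift[OF K norm_meas]) simp
  moreover have "(\<lambda>z. f (x - z)) \<in> borel_measurable K" for x
    by (subst measurable_cong_sets[OF K(2) refl]) (rule measurable_reflect_shift[OF f_meas])
  ultimately show ?thesis
    by (auto elim!: AE_mp simp: integrable_iff_bounded top.not_eq_extremum)
qed

lemma measurable_conv_fun:
  fixes K :: "real measure" and f :: "real \<Rightarrow> real"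
  assumes K: "finite_measure K" "sets K = sets borel" and f: "f \<in> borel_measurable borel"
  shows "conv_fun K f \<in> borel_measurable lborel"
proof -
  interpret K: finite_measure K by fact
  show ?thesis
    using K.borel_measurable_lebesgue_integral[of "\<lambda>x z. f (x - z)" lborel] measurable_pair_diff[OF K(2) f]
    unfolding conv_fun_def by (simp add: split_beta')
qed

lemma nn_integral_abs_conv_fun_le:
  fixes K :: "real measure" and f :: "real \<Rightarrow> real"
  assumes K: "finite_measure K" "sets K = sets borel" and f: "integrable lborel f"
  shows "(\<integral>\<^sup>+x. ennreal \<bar>conv_fun K f x\<bar> \<partial>lborel) \<le> ennreal (measure K UNIV * (\<integral>x. \<bar>f x\<bar> \<partial>lborel))"
proof -
  interpret K: finite_measure K by fact
  have abs_meas: "(\<lambda>x. ennreal \<bar>f x\<bar>) \<in> borel_measurable borel"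
    using f by auto
  have pointwise: "ennreal \<bar>conv_fun K f x\<bar> \<le> (\<integral>\<^sup>+z. ennreal \<bar>f (x - z)\<bar> \<partial>K)" for x
  proof (cases "integrable K (\<lambda>z. f (x - z))")
    case True
    then show ?thesis
      using integral_norm_bound_ennreal[OF True] by (simp add: conv_fun_def)
  qed (simp add: conv_fun_def not_integrable_integral_eq)
  have "(\<integral>\<^sup>+x. ennreal \<bar>conv_fun K f x\<bar> \<partial>lborel) \<le> (\<integral>\<^sup>+x. (\<integral>\<^sup>+z. ennreal \<bar>f (x - z)\<bar> \<partial>K) \<partial>lborel)"
    by (intro nn_integral_mono pointwise)
  also have "\<dots> = emeasure K UNIV * (\<integral>\<^sup>+x. ennreal \<bar>f x\<bar> \<partial>lborel)"
    by (rule nn_integral_shift_convolution[OF K abs_meas])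
  also have "\<dots> = ennreal (measure K UNIV * (\<integral>x. \<bar>f x\<bar> \<partial>lborel))"
    using f by (simp add: nn_integral_eq_integral K.emeasure_eq_measure ennreal_mult)
  finally show ?thesis .
qed

lemma integrable_conv_fun:
  fixes K :: "real measure" and f :: "real \<Rightarrow> real"
  assumes K: "finite_measure K" "sets K = sets borel" and f: "integrable lborel f"
  shows "integrable lborel (conv_fun K f)"
proof -
  have "(\<integral>\<^sup>+x. ennreal (norm (conv_fun K f x)) \<partial>lborel) < \<infinity>"
    using nn_integral_abs_conv_fun_le[OF K f] by (simp add: le_less_trans)
  moreover have "conv_fun K f \<in> borel_measurable lborel"
    using f by (intro measurable_conv_fun K) auto
  ultimately show ?thesis
    by (simp add: integrable_iff_bounded)
qed

lemma L1_norm_conv_fun_le: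
  fixes K :: "real measure" and f :: "real \<Rightarrow> real"
  assumes K: "finite_measure K" "sets K = sets borel" and f: "integrable lborel f"
  shows "(\<integral>x. \<bar>conv_fun K f x\<bar> \<partial>lborel) \<le> measure K UNIV * (\<integral>x. \<bar>f x\<bar> \<partial>lborel)"
  using nn_integral_abs_conv_fun_le[OF K f] integrable_conv_fun[OF K f]
  by (simp add: nn_integral_eq_integral)

lemma AE_shift:
  fixes K :: "real measure"
  assumes K: "finite_measure K" "sets K = sets borel"
    and P: "Measurable.pred borel P" and AE: "AE x in lborel. P x"
  shows "AE x in lborel. AE z in K. P (x - z)"
proof -
  define h where "h x = (indicator {x. \<not> P x} x :: ennreal)" for x
  have h_meas: "h \<in> borel_measurable borel"
    using P unfolding h_def by measurable
  have "(\<integral>\<^sup>+x. h x \<partial>lborel) = 0"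
    using AE h_meas by (subst nn_integral_0_iff_AE) (auto simp: h_def)
  then have "(\<integral>\<^sup>+x. (\<integral>\<^sup>+z. h (x - z) \<partial>K) \<partial>lborel) = 0"
    by (simp add: nn_integral_shift_convolution[OF K h_meas])
  then have "AE x in lborel. (\<integral>\<^sup>+z. h (x - z) \<partial>K) = 0"
    using measurable_nn_integral_shift[OF K h_meas] by (subst (asm) nn_integral_0_iff_AE) auto
  moreover have "(\<lambda>z. h (x - z)) \<in> borel_measurable K" for x
    by (subst measurable_cong_sets[OF K(2) refl]) (rule measurable_reflect_shift[OF h_meas])
  ultimately show ?thesis
    by (auto elim!: AE_mp simp: nn_integral_0_iff_AE h_def split: split_indicator)
qed

lemma conv_fun_AE_cong:
  fixes K :: "real measure" and f g :: "real \<Rightarrow> real"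
  assumes K: "finite_measure K" "sets K = sets borel" and f: "integrable lborel f" and g: "integrable lborel g"
    and AE: "AE x in lborel. f x = g x"
  shows "AE x in lborel. conv_fun K f x = conv_fun K g x"
proof -
  have meas: "f \<in> borel_measurable borel" "g \<in> borel_measurable borel"
    using f g by auto
  have "(\<lambda>z. f (x - z)) \<in> borel_measurable K" "(\<lambda>z. g (x - z)) \<in> borel_measurable K" for x
    by (subst measurable_cong_sets[OF K(2) refl], rule measurable_reflect_shift, simp add: meas)+
  with AE_shift[OF K _ AE] meas show ?thesis
    unfolding conv_fun_def by (auto elim!: AE_mp intro: integral_cong_AE)
qed

lemma conv_fun_linear:
  fixes K :: "real measure" and f g :: "real \<Rightarrow> real"
  assumes K: "finite_measure K" "sets K = sets borel" and f: "integrable lborel f" and g: "integrable lborel g"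
  shows "AE x in lborel. conv_fun K (\<lambda>y. a * f y + b * g y) x = a * conv_fun K f x + b * conv_fun K g x"
  using AE_integrable_shift[OF K f] AE_integrable_shift[OF K g]
  by eventually_elim (simp add: conv_fun_def)

lemma conv_fun_diff:
  fixes K :: "real measure" and f g :: "real \<Rightarrow> real"
  assumes "finite_measure K" "sets K = sets borel" "integrable lborel f" "integrable lborel g"
  shows "AE x in lborel. conv_fun K (\<lambda>y. f y - g y) x = conv_fun K f x - conv_fun K g x"
  using conv_fun_linear[OF assms, of 1 "-1"] by simp

lemma conv_fun_convolution:
  fixes M K :: "real measure" and f :: "real \<Rightarrow> real"
  assumes M: "finite_measure M" "sets M = sets borel" and K: "finite_measure K" "sets K = sets borel"
    and f: "integrable lborel f"
  shows "AE x in lborel. conv_fun M (conv_fun K f) x = conv_fun (M \<star> K) f x"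
proof -
  have MK: "finite_measure (M \<star> K)" "sets (M \<star> K) = sets borel"
    using convolution_finite[OF M(1) K(1) K(2) M(2)] by auto
  have f_meas: "f \<in> borel_measurable borel"
    using f by auto
  show ?thesis
    using AE_integrable_shift[OF MK f]
  proof eventually_elim
    case (elim x)
    have "conv_fun (M \<star> K) f x = (\<integral>y. (\<integral>z. f (x - (y + z)) \<partial>K) \<partial>M)"
      unfolding conv_fun_def by (rule integral_convolution[OF M K measurable_reflect_shift[OF f_meas] elim])
    then show ?case
      by (simp add: conv_fun_def diff_diff_eq)
  qed
qed

lemma conv_fun_measure_add:
  fixes M N\<^sub>1 N\<^sub>2 :: "real measure" and f :: "real \<Rightarrow> real"
  assumes M: "finite_measure M" "sets M = sets borel" and sets: "sets N\<^sub>1 = sets borel" "sets N\<^sub>2 = sets borel"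
    and add: "\<And>A. A \<in> sets borel \<Longrightarrow> emeasure M A = emeasure N\<^sub>1 A + emeasure N\<^sub>2 A"
    and f: "integrable lborel f"
  shows "AE x in lborel. conv_fun M f x = conv_fun N\<^sub>1 f x + conv_fun N\<^sub>2 f x"
  using AE_integrable_shift[OF M f]
proof eventually_elim
  case (elim x)
  show ?case
    unfolding conv_fun_def by (rule integral_measure_add(3)) (use sets M(2) add elim in auto)
qed

lemma conv_fun_return:
  fixes f :: "real \<Rightarrow> real"
  assumes "integrable lborel f"
  shows "conv_fun (return borel 0) f = f"
  using assms measurable_reflect_shift[of f] by (auto simp: conv_fun_def integral_return)

section \<open>Inverse kernels\<close>

lemma suminf_ennreal_swap:
  fixes g :: "nat \<Rightarrow> nat \<Rightarrow> ennreal"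
  shows "(\<Sum>k. \<Sum>n. g n k) = (\<Sum>n. \<Sum>k. g n k)"
proof -
  have "(\<Sum>k. \<Sum>n. g n k) = (\<Sum>k. \<integral>\<^sup>+n. g n k \<partial>count_space UNIV)"
    by (simp add: nn_integral_count_space_nat)
  also have "\<dots> = (\<integral>\<^sup>+n. (\<Sum>k. g n k) \<partial>count_space UNIV)"
    by (rule nn_integral_suminf[symmetric]) simp
  also have "\<dots> = (\<Sum>n. \<Sum>k. g n k)"
    by (simp add: nn_integral_count_space_nat)
  finally show ?thesis .
qed

definition measure_suminf :: "'a measure \<Rightarrow> (nat \<Rightarrow> ennreal) \<Rightarrow> (nat \<Rightarrow> 'a measure) \<Rightarrow> 'a measure" where
  "measure_suminf \<Omega> c M = measure_of (space \<Omega>) (sets \<Omega>) (\<lambda>A. \<Sum>n. c n * emeasure (M n) A)"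

lemma sets_measure_suminf [simp]: "sets (measure_suminf \<Omega> c M) = sets \<Omega>"
  by (simp add: measure_suminf_def)

lemma space_measure_suminf [simp]: "space (measure_suminf \<Omega> c M) = space \<Omega>"
  by (simp add: measure_suminf_def)

lemma emeasure_measure_suminf:
  assumes M: "\<And>n. sets (M n) = sets \<Omega>" and A: "A \<in> sets \<Omega>"
  shows "emeasure (measure_suminf \<Omega> c M) A = (\<Sum>n. c n * emeasure (M n) A)"
proof -
  have "countably_additive (sets \<Omega>) (\<lambda>A. \<Sum>n. c n * emeasure (M n) A)"
    unfolding countably_additive_def
  proof (intro allI impI)
    fix A :: "nat \<Rightarrow> 'a set"
    assume "range A \<subseteq> sets \<Omega>" "disjoint_family A" "(\<Union>k. A k) \<in> sets \<Omega>"
    then show "(\<Sum>k. \<Sum>n. c n * emeasure (M n) (A k)) = (\<Sum>n. c n * emeasure (M n) (\<Union>k. A k))"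
      using M by (simp add: suminf_ennreal_swap[of "\<lambda>n k. c n * emeasure (M n) (A k)"] suminf_emeasure)
  qed
  then show ?thesis
    unfolding measure_suminf_def using A
    by (intro emeasure_measure_of_sigma) (auto simp: positive_def sets.sigma_algebra_axioms)
qed

primrec conv_power :: "real measure \<Rightarrow> nat \<Rightarrow> real measure" where
  "conv_power \<sigma> 0 = return borel 0"
| "conv_power \<sigma> (Suc n) = (\<sigma> \<star> conv_power \<sigma> n)"

lemma sets_conv_power [simp]: "sets (conv_power \<sigma> n) = sets borel"
  by (cases n) simp_all

lemma space_conv_power [simp]: "space (conv_power \<sigma> n) = UNIV"
  by (cases n) simp_all

lemma finite_measure_conv_power:
  assumes "finite_measure \<sigma>" "sets \<sigma> = sets borel"
  shows "finite_measure (conv_power \<sigma> n)"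
proof (induction n)
  case 0
  show ?case
    using prob_space_return[of "0::real" borel] by (simp add: prob_space_def)
next
  case (Suc n)
  then show ?case
    using convolution_finite[OF assms(1)] assms(2) by simp
qed

lemma emeasure_conv_power_UNIV:
  assumes \<sigma>: "finite_measure \<sigma>" "sets \<sigma> = sets borel"
  shows "emeasure (conv_power \<sigma> n) UNIV = ennreal (measure \<sigma> UNIV ^ n)"
proof (induction n)
  case (Suc n)
  interpret finite_measure \<sigma> by fact
  show ?case
    using Suc \<sigma> finite_measure_conv_power[OF \<sigma>] sets_eq_imp_space_eq[OF \<sigma>(2)]
    by (simp add: convolution_emeasure emeasure_eq_measure ennreal_mult[symmetric] mult.commute)
qed simp

lemma emeasure_convolution_measure_suminf:
  fixes \<rho> :: "real measure"
  assumes \<rho>: "finite_measure \<rho>" "sets \<rho> = sets borel"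
    and M: "\<And>n. finite_measure (M n)" "\<And>n. sets (M n) = sets borel"
    and S: "finite_measure (measure_suminf borel c M)" and A: "A \<in> sets borel"
  shows "emeasure (\<rho> \<star> measure_suminf borel c M) A = (\<Sum>n. c n * emeasure (\<rho> \<star> M n) A)"
proof -
  have space: "space \<rho> = UNIV" "\<And>n. space (M n) = UNIV"
    using sets_eq_imp_space_eq[OF \<rho>(2)] sets_eq_imp_space_eq[OF M(2)] by simp_all
  have meas: "(\<lambda>y. emeasure (M n) {x. x + y \<in> A}) \<in> borel_measurable \<rho>" for n
    by (subst measurable_cong_sets[OF \<rho>(2) refl]) (rule measurable_emeasure_translate[OF M(1,2) A])
  have "emeasure (\<rho> \<star> measure_suminf borel c M) A
      = (\<integral>\<^sup>+y. (\<Sum>n. c n * emeasure (M n) {x. x + y \<in> A}) \<partial>\<rho>)"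
    using A \<rho> S M(2) space
    by (simp add: convolution_emeasure emeasure_measure_suminf translate_in_borel)
  also have "\<dots> = (\<Sum>n. c n * (\<integral>\<^sup>+y. emeasure (M n) {x. x + y \<in> A} \<partial>\<rho>))"
    using meas by (simp add: nn_integral_suminf nn_integral_cmult)
  also have "\<dots> = (\<Sum>n. c n * emeasure (\<rho> \<star> M n) A)"
    using A \<rho> M space by (simp add: convolution_emeasure)
  finally show ?thesis .
qed

lemma emeasure_convolution_atom_split:
  fixes \<rho> \<sigma> M :: "real measure" and a :: ennreal
  assumes \<rho>: "finite_measure \<rho>" "sets \<rho> = sets borel" and \<sigma>: "finite_measure \<sigma>" "sets \<sigma> = sets borel"
    and M: "finite_measure M" "sets M = sets borel"
    and split: "\<And>B. B \<in> sets borel \<Longrightarrow> emeasure \<rho> B = a * emeasure (return borel 0) B + emeasure \<sigma> B"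
    and A: "A \<in> sets borel"
  shows "emeasure (\<rho> \<star> M) A = a * emeasure M A + emeasure (\<sigma> \<star> M) A"
proof -
  have space: "space \<rho> = UNIV" "space \<sigma> = UNIV" "space M = UNIV"
    using sets_eq_imp_space_eq[OF \<rho>(2)] sets_eq_imp_space_eq[OF \<sigma>(2)] sets_eq_imp_space_eq[OF M(2)]
    by simp_all
  have meas: "(\<lambda>y. emeasure M {x. x + y \<in> A}) \<in> borel_measurable borel"
    by (rule measurable_emeasure_translate[OF M A])
  have "emeasure (\<rho> \<star> M) A = (\<integral>\<^sup>+y. emeasure M {x. x + y \<in> A} \<partial>\<rho>)"
    using A \<rho> M space by (simp add: convolution_emeasure)
  also have "\<dots> = (\<integral>\<^sup>+y. emeasure M {x. x + y \<in> A} \<partial>scale_measure a (return borel 0))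
      + (\<integral>\<^sup>+y. emeasure M {x. x + y \<in> A} \<partial>\<sigma>)"
    using \<rho>(2) \<sigma>(2) split meas by (intro nn_integral_measure_add) auto
  also have "\<dots> = a * emeasure M A + emeasure (\<sigma> \<star> M) A"
    using A \<sigma> M space meas by (simp add: nn_integral_scale_measure nn_integral_return convolution_emeasure)
  finally show ?thesis .
qed

lemma finite_measure_split_atom:
  fixes \<rho> :: "real measure"
  assumes \<rho>: "finite_measure \<rho>" "sets \<rho> = sets borel"
  obtains \<sigma> where "finite_measure \<sigma>" "sets \<sigma> = sets borel"
    "measure \<sigma> UNIV = measure \<rho> UNIV - measure \<rho> {0}"
    "\<And>B. B \<in> sets borel \<Longrightarrow>
      emeasure \<rho> B = ennreal (measure \<rho> {0}) * emeasure (return borel 0) B + emeasure \<sigma> B"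
proof -
  interpret finite_measure \<rho> by fact
  define \<sigma> where "\<sigma> = density \<rho> (indicator (- {0}))"
  have compl: "- {0} \<in> sets \<rho>"
    using \<rho>(2) by simp
  have "measure \<sigma> UNIV = measure \<rho> (UNIV - {0})"
    unfolding \<sigma>_def using compl \<rho>(2) by (simp add: measure_restricted Compl_eq_Diff_UNIV)
  also have "\<dots> = measure \<rho> UNIV - measure \<rho> {0}"
    using \<rho>(2) sets_eq_imp_space_eq[OF \<rho>(2)] by (subst finite_measure_Diff) auto
  finally have "measure \<sigma> UNIV = measure \<rho> UNIV - measure \<rho> {0}" .
  moreover have "emeasure \<rho> B = ennreal (measure \<rho> {0}) * emeasure (return borel 0) B + emeasure \<sigma> B"
    if B: "B \<in> sets borel" for B
  proof -
    have "emeasure \<rho> B = emeasure \<rho> (B \<inter> {0}) + emeasure \<rho> (- {0} \<inter> B)"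
      using B \<rho>(2) by (subst plus_emeasure) (auto simp: Int_commute Int_Diff_Un Diff_eq[symmetric])
    also have "emeasure \<rho> (B \<inter> {0}) = ennreal (measure \<rho> {0}) * emeasure (return borel 0) B"
      using B by (cases "0 \<in> B") (auto simp: emeasure_eq_measure)
    also have "emeasure \<rho> (- {0} \<inter> B) = emeasure \<sigma> B"
      unfolding \<sigma>_def using compl B \<rho>(2) by (simp add: emeasure_restricted)
    finally show ?thesis .
  qed
  moreover have "finite_measure \<sigma>" "sets \<sigma> = sets borel"
    unfolding \<sigma>_def using compl \<rho>(2) by (simp_all add: finite_measure_restricted)
  ultimately show ?thesis
    using that by blast
qed

text \<open>The terms of index \<open>f n\<close> of the Neumann series \<open>\<Sum>\<^sub>k (-1)\<^sup>k a\<^sup>-\<^sup>k\<^sup>-\<^sup>1 \<sigma>\<^sup>*\<^sup>k\<close> for the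
  convolution inverse of \<open>a \<delta>\<^sub>0 + \<sigma>\<close>, without their signs.\<close>
definition neumann_kernel :: "real \<Rightarrow> real measure \<Rightarrow> (nat \<Rightarrow> nat) \<Rightarrow> real measure" where
  "neumann_kernel a \<sigma> f =
    measure_suminf borel (\<lambda>n. ennreal ((1 / a) ^ Suc (f n))) (\<lambda>n. conv_power \<sigma> (f n))"

lemma sets_neumann_kernel [simp]: "sets (neumann_kernel a \<sigma> f) = sets borel"
  by (simp add: neumann_kernel_def)

lemma finite_measure_neumann_kernel:
  assumes \<sigma>: "finite_measure \<sigma>" "sets \<sigma> = sets borel"
    and a: "measure \<sigma> UNIV < a" and f: "\<And>n. n \<le> f n"
  shows "finite_measure (neumann_kernel a \<sigma> f)"
proof (rule finite_measureI)
  define s where "s = measure \<sigma> UNIV"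
  have s: "0 \<le> s" "s < a"
    using a by (simp_all add: s_def)
  then have a_pos: "0 < a"
    by linarith
  have "summable (\<lambda>n. (1 / a) * (s / a) ^ n)"
    using s by (intro summable_mult summable_geometric) simp
  moreover have "norm ((1 / a) ^ Suc (f n) * s ^ f n) \<le> (1 / a) * (s / a) ^ n" for n
  proof -
    have "norm ((1 / a) ^ Suc (f n) * s ^ f n) = (1 / a) * (s / a) ^ f n"
      using s a_pos by (simp add: power_divide)
    also have "\<dots> \<le> (1 / a) * (s / a) ^ n"
      using s f by (intro mult_left_mono power_decreasing) auto
    finally show ?thesis .
  qed
  ultimately have summable: "summable (\<lambda>n. (1 / a) ^ Suc (f n) * s ^ f n)"
    by (rule summable_comparison_test'[where N=0])
  have "emeasure (neumann_kernel a \<sigma> f) (space (neumann_kernel a \<sigma> f))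
      = (\<Sum>n. ennreal ((1 / a) ^ Suc (f n)) * emeasure (conv_power \<sigma> (f n)) UNIV)"
    by (simp add: neumann_kernel_def emeasure_measure_suminf del: power_Suc)
  also have "\<dots> = (\<Sum>n. ennreal ((1 / a) ^ Suc (f n) * s ^ f n))"
    using s a_pos by (intro suminf_cong)
      (simp add: emeasure_conv_power_UNIV[OF \<sigma>] s_def ennreal_mult del: power_Suc)
  also have "\<dots> \<noteq> \<infinity>"
  proof -
    have "0 \<le> (1 / a) ^ Suc (f n) * s ^ f n" for n
      using s a_pos by (intro mult_nonneg_nonneg zero_le_power) auto
    from ennreal_suminf_neq_top[OF summable this] show ?thesis
      unfolding infinity_ennreal_def .
  qed
  finally show "emeasure (neumann_kernel a \<sigma> f) (space (neumann_kernel a \<sigma> f)) \<noteq> \<infinity>" .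
qed

lemma emeasure_convolution_neumann_kernel:
  fixes \<rho> \<sigma> :: "real measure"
  assumes \<rho>: "finite_measure \<rho>" "sets \<rho> = sets borel" and \<sigma>: "finite_measure \<sigma>" "sets \<sigma> = sets borel"
    and split: "\<And>B. B \<in> sets borel \<Longrightarrow> emeasure \<rho> B = ennreal a * emeasure (return borel 0) B + emeasure \<sigma> B"
    and a: "0 < a" and K: "finite_measure (neumann_kernel a \<sigma> f)" and A: "A \<in> sets borel"
  shows "emeasure (\<rho> \<star> neumann_kernel a \<sigma> f) A =
    (\<Sum>n. ennreal ((1 / a) ^ f n) * emeasure (conv_power \<sigma> (f n)) A) +
    (\<Sum>n. ennreal ((1 / a) ^ Suc (f n)) * emeasure (conv_power \<sigma> (Suc (f n))) A)"
proof -
  have "emeasure (\<rho> \<star> neumann_kernel a \<sigma> f) A =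
      (\<Sum>n. ennreal ((1 / a) ^ Suc (f n)) * emeasure (\<rho> \<star> conv_power \<sigma> (f n)) A)"
    using K A finite_measure_conv_power[OF \<sigma>] unfolding neumann_kernel_def
    by (intro emeasure_convolution_measure_suminf \<rho>) auto
  also have "\<dots> = (\<Sum>n. ennreal ((1 / a) ^ Suc (f n)) * (ennreal a * emeasure (conv_power \<sigma> (f n)) A
      + emeasure (conv_power \<sigma> (Suc (f n))) A))"
    using finite_measure_conv_power[OF \<sigma>]
    by (simp add: emeasure_convolution_atom_split[OF \<rho> \<sigma> _ _ split A])
  also have "\<dots> = (\<Sum>n. ennreal ((1 / a) ^ f n) * emeasure (conv_power \<sigma> (f n)) A
      + ennreal ((1 / a) ^ Suc (f n)) * emeasure (conv_power \<sigma> (Suc (f n))) A)"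
    using a by (simp add: distrib_left mult.assoc[symmetric] ennreal_mult[symmetric])
  also have "\<dots> = (\<Sum>n. ennreal ((1 / a) ^ f n) * emeasure (conv_power \<sigma> (f n)) A) +
      (\<Sum>n. ennreal ((1 / a) ^ Suc (f n)) * emeasure (conv_power \<sigma> (Suc (f n))) A)"
    by (rule suminf_add[symmetric]) (rule summableI)+
  finally show ?thesis .
qed

lemma inverse_kernels_exist:
  fixes \<rho> :: "real measure"
  assumes \<rho>: "finite_measure \<rho>" "sets \<rho> = sets borel"
    and atom: "measure \<rho> UNIV < 2 * measure \<rho> {0}"
  obtains K\<^sub>p K\<^sub>m where "finite_measure K\<^sub>p" "sets K\<^sub>p = sets borel" "finite_measure K\<^sub>m" "sets K\<^sub>m = sets borel"
    "\<And>A. A \<in> sets borel \<Longrightarrow> emeasure (\<rho> \<star> K\<^sub>p) A = emeasure (return borel 0) A + emeasure (\<rho> \<star> K\<^sub>m) A"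
proof -
  define a where "a = measure \<rho> {0}"
  obtain \<sigma> where \<sigma>: "finite_measure \<sigma>" "sets \<sigma> = sets borel"
    and \<sigma>_UNIV: "measure \<sigma> UNIV = measure \<rho> UNIV - a"
    and split: "\<And>B. B \<in> sets borel \<Longrightarrow> emeasure \<rho> B = ennreal a * emeasure (return borel 0) B + emeasure \<sigma> B"
    using finite_measure_split_atom[OF \<rho>] unfolding a_def by blast
  have a: "0 < a" "measure \<sigma> UNIV < a"
    using atom measure_nonneg[of \<rho> UNIV] \<sigma>_UNIV unfolding a_def by linarith+
  define K\<^sub>p where "K\<^sub>p = neumann_kernel a \<sigma> (\<lambda>n. 2 * n)"
  define K\<^sub>m where "K\<^sub>m = neumann_kernel a \<sigma> (\<lambda>n. Suc (2 * n))"
  have K: "finite_measure K\<^sub>p" "finite_measure K\<^sub>m"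
    unfolding K\<^sub>p_def K\<^sub>m_def by (intro finite_measure_neumann_kernel[OF \<sigma> a(2)]; simp)+
  define t where "t A k = ennreal ((1 / a) ^ k) * emeasure (conv_power \<sigma> k) A" for A k
  have "emeasure (\<rho> \<star> K\<^sub>p) A = emeasure (return borel 0) A + emeasure (\<rho> \<star> K\<^sub>m) A"
    if A: "A \<in> sets borel" for A
  proof -
    have "emeasure (\<rho> \<star> K\<^sub>p) A = (\<Sum>n. t A (2 * n)) + (\<Sum>n. t A (Suc (2 * n)))"
      using emeasure_convolution_neumann_kernel[OF \<rho> \<sigma> split a(1) K(1)[unfolded K\<^sub>p_def] A]
      by (simp add: K\<^sub>p_def t_def)
    moreover have "emeasure (\<rho> \<star> K\<^sub>m) A = (\<Sum>n. t A (Suc (2 * n))) + (\<Sum>n. t A (2 * Suc n))"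
      using emeasure_convolution_neumann_kernel[OF \<rho> \<sigma> split a(1) K(2)[unfolded K\<^sub>m_def] A]
      by (simp add: K\<^sub>m_def t_def)
    moreover have "(\<Sum>n. t A (2 * n)) = t A 0 + (\<Sum>n. t A (2 * Suc n))"
      using suminf_offset[of "\<lambda>n. t A (2 * n)" 1] by (simp add: summableI add.commute)
    moreover have "t A 0 = emeasure (return borel 0) A"
      by (simp add: t_def)
    ultimately show ?thesis
      by (simp add: ac_simps)
  qed
  with K show ?thesis
    by (intro that[of K\<^sub>p K\<^sub>m]) (simp_all add: K\<^sub>p_def K\<^sub>m_def)
qed

section \<open>Invertibility of convolution operators\<close>

lemma conv_sm_inverse_kernels:
  fixes \<rho> K\<^sub>p K\<^sub>m :: "real measure"
  assumes \<rho>K\<^sub>p: "finite_measure (\<rho> \<star> K\<^sub>p)"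
    and kernels: "\<And>A. A \<in> sets borel \<Longrightarrow> emeasure (\<rho> \<star> K\<^sub>p) A = emeasure (return borel 0) A + emeasure (\<rho> \<star> K\<^sub>m) A"
    and \<nu>: "signed_measure \<nu>"
  shows "(\<lambda>A. conv_sm (\<rho> \<star> K\<^sub>p) \<nu> A - conv_sm (\<rho> \<star> K\<^sub>m) \<nu> A) = \<nu>"
proof
  fix A
  have "conv_sm (\<rho> \<star> K\<^sub>p) \<nu> A = conv_sm (return borel 0) \<nu> A + conv_sm (\<rho> \<star> K\<^sub>m) \<nu> A"
    using \<rho>K\<^sub>p kernels \<nu> by (intro conv_sm_measure_add) auto
  then show "conv_sm (\<rho> \<star> K\<^sub>p) \<nu> A - conv_sm (\<rho> \<star> K\<^sub>m) \<nu> A = \<nu> A"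
    using conv_sm_return[OF \<nu>] by simp
qed

lemma tv_norm_conv_sm_diff_le:
  fixes K\<^sub>p K\<^sub>m :: "real measure"
  assumes K\<^sub>p: "finite_measure K\<^sub>p" "sets K\<^sub>p = sets borel" and K\<^sub>m: "finite_measure K\<^sub>m" "sets K\<^sub>m = sets borel"
    and \<nu>: "signed_measure \<nu>"
  shows "tv_norm (\<lambda>A. conv_sm K\<^sub>p \<nu> A - conv_sm K\<^sub>m \<nu> A) \<le> (measure K\<^sub>p UNIV + measure K\<^sub>m UNIV) * tv_norm \<nu>"
proof -
  have "tv_norm (\<lambda>A. conv_sm K\<^sub>p \<nu> A - conv_sm K\<^sub>m \<nu> A) \<le> tv_norm (conv_sm K\<^sub>p \<nu>) + tv_norm (conv_sm K\<^sub>m \<nu>)"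
    by (intro tv_norm_diff_le signed_measure_conv_sm K\<^sub>p K\<^sub>m \<nu>)
  also have "\<dots> \<le> measure K\<^sub>p UNIV * tv_norm \<nu> + measure K\<^sub>m UNIV * tv_norm \<nu>"
    by (intro add_mono tv_norm_conv_sm_le K\<^sub>p K\<^sub>m \<nu>)
  finally show ?thesis
    by (simp add: distrib_right)
qed

lemma sm_invertible_conv_sm:
  fixes \<rho> K\<^sub>p K\<^sub>m :: "real measure"
  assumes \<rho>: "finite_measure \<rho>" "sets \<rho> = sets borel"
    and K\<^sub>p: "finite_measure K\<^sub>p" "sets K\<^sub>p = sets borel" and K\<^sub>m: "finite_measure K\<^sub>m" "sets K\<^sub>m = sets borel"
    and kernels: "\<And>A. A \<in> sets borel \<Longrightarrow> emeasure (\<rho> \<star> K\<^sub>p) A = emeasure (return borel 0) A + emeasure (\<rho> \<star> K\<^sub>m) A"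
  shows "sm_invertible (conv_sm \<rho>)"
proof -
  define S where "S \<nu> = (\<lambda>A. conv_sm K\<^sub>p \<nu> A - conv_sm K\<^sub>m \<nu> A)" for \<nu>
  have \<rho>K\<^sub>p: "finite_measure (\<rho> \<star> K\<^sub>p)"
    using convolution_finite[OF \<rho>(1) K\<^sub>p(1) K\<^sub>p(2) \<rho>(2)] .
  have commute: "(K\<^sub>p \<star> \<rho>) = (\<rho> \<star> K\<^sub>p)" "(K\<^sub>m \<star> \<rho>) = (\<rho> \<star> K\<^sub>m)"
    using convolution_commutative \<rho> K\<^sub>p K\<^sub>m by metis+
  have inverse_kernels: "(\<lambda>A. conv_sm (\<rho> \<star> K\<^sub>p) \<nu> A - conv_sm (\<rho> \<star> K\<^sub>m) \<nu> A) = \<nu>"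
    if "signed_measure \<nu>" for \<nu>
    using \<rho>K\<^sub>p kernels that by (rule conv_sm_inverse_kernels)
  have S_signed: "signed_measure (S \<nu>)" if "signed_measure \<nu>" for \<nu>
    unfolding S_def by (intro signed_measure_minus signed_measure_conv_sm K\<^sub>p K\<^sub>m that)
  have "conv_sm \<rho> (S \<nu>) = \<nu>" if \<nu>: "signed_measure \<nu>" for \<nu>
    using conv_sm_diff[OF \<rho> signed_measure_conv_sm[OF K\<^sub>p \<nu>] signed_measure_conv_sm[OF K\<^sub>m \<nu>]]
    by (simp add: S_def conv_sm_convolution \<rho> K\<^sub>p K\<^sub>m \<nu> inverse_kernels)
  moreover have "S (conv_sm \<rho> \<nu>) = \<nu>" if \<nu>: "signed_measure \<nu>" for \<nu>
    by (simp add: S_def conv_sm_convolution \<rho> K\<^sub>p K\<^sub>m \<nu> inverse_kernels commute)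
  moreover have "S (\<lambda>A. a * \<nu> A + b * \<mu> A) = (\<lambda>A. a * S \<nu> A + b * S \<mu> A)"
    if "signed_measure \<nu>" "signed_measure \<mu>" for \<nu> \<mu> a b
    using conv_sm_linear[OF K\<^sub>p that] conv_sm_linear[OF K\<^sub>m that] by (simp add: S_def algebra_simps)
  moreover have "tv_norm (S \<nu>) \<le> (measure K\<^sub>p UNIV + measure K\<^sub>m UNIV) * tv_norm \<nu>"
    if "signed_measure \<nu>" for \<nu>
    unfolding S_def using K\<^sub>p K\<^sub>m that by (rule tv_norm_conv_sm_diff_le)
  ultimately show ?thesis
    unfolding sm_invertible_def using signed_measure_conv_sm[OF \<rho>] S_signed
    by (intro conjI allI impI exI[of _ S]) auto
qed

lemma conv_fun_inverse_kernels:
  fixes \<rho> K\<^sub>p K\<^sub>m :: "real measure" and f :: "real \<Rightarrow> real"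
  assumes \<rho>K\<^sub>p: "finite_measure (\<rho> \<star> K\<^sub>p)"
    and kernels: "\<And>A. A \<in> sets borel \<Longrightarrow> emeasure (\<rho> \<star> K\<^sub>p) A = emeasure (return borel 0) A + emeasure (\<rho> \<star> K\<^sub>m) A"
    and f: "integrable lborel f"
  shows "AE x in lborel. conv_fun (\<rho> \<star> K\<^sub>p) f x - conv_fun (\<rho> \<star> K\<^sub>m) f x = f x"
proof -
  have "AE x in lborel. conv_fun (\<rho> \<star> K\<^sub>p) f x = conv_fun (return borel 0) f x + conv_fun (\<rho> \<star> K\<^sub>m) f x"
    using \<rho>K\<^sub>p kernels f by (intro conv_fun_measure_add) auto
  then show ?thesis
    by eventually_elim (simp add: conv_fun_return[OF f])
qed

lemma L1_norm_conv_fun_diff_le: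
  fixes K\<^sub>p K\<^sub>m :: "real measure" and f :: "real \<Rightarrow> real"
  assumes K\<^sub>p: "finite_measure K\<^sub>p" "sets K\<^sub>p = sets borel" and K\<^sub>m: "finite_measure K\<^sub>m" "sets K\<^sub>m = sets borel"
    and f: "integrable lborel f"
  shows "(\<integral>x. \<bar>conv_fun K\<^sub>p f x - conv_fun K\<^sub>m f x\<bar> \<partial>lborel)
    \<le> (measure K\<^sub>p UNIV + measure K\<^sub>m UNIV) * (\<integral>x. \<bar>f x\<bar> \<partial>lborel)"
proof -
  note integrable = integrable_conv_fun[OF K\<^sub>p f] integrable_conv_fun[OF K\<^sub>m f]
  have "(\<integral>x. \<bar>conv_fun K\<^sub>p f x - conv_fun K\<^sub>m f x\<bar> \<partial>lborel)
      \<le> (\<integral>x. \<bar>conv_fun K\<^sub>p f x\<bar> + \<bar>conv_fun K\<^sub>m f x\<bar> \<partial>lborel)"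
    using integrable by (intro integral_mono) auto
  also have "\<dots> = (\<integral>x. \<bar>conv_fun K\<^sub>p f x\<bar> \<partial>lborel) + (\<integral>x. \<bar>conv_fun K\<^sub>m f x\<bar> \<partial>lborel)"
    using integrable by (intro Bochner_Integration.integral_add) auto
  also have "\<dots> \<le> measure K\<^sub>p UNIV * (\<integral>x. \<bar>f x\<bar> \<partial>lborel) + measure K\<^sub>m UNIV * (\<integral>x. \<bar>f x\<bar> \<partial>lborel)"
    by (intro add_mono L1_norm_conv_fun_le K\<^sub>p K\<^sub>m f)
  finally show ?thesis
    by (simp add: distrib_right)
qed

lemma L1_invertible_conv_fun:
  fixes \<rho> K\<^sub>p K\<^sub>m :: "real measure"
  assumes \<rho>: "finite_measure \<rho>" "sets \<rho> = sets borel"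
    and K\<^sub>p: "finite_measure K\<^sub>p" "sets K\<^sub>p = sets borel" and K\<^sub>m: "finite_measure K\<^sub>m" "sets K\<^sub>m = sets borel"
    and kernels: "\<And>A. A \<in> sets borel \<Longrightarrow> emeasure (\<rho> \<star> K\<^sub>p) A = emeasure (return borel 0) A + emeasure (\<rho> \<star> K\<^sub>m) A"
  shows "L1_invertible (conv_fun \<rho>)"
proof -
  define S where "S f = (\<lambda>x. conv_fun K\<^sub>p f x - conv_fun K\<^sub>m f x)" for f
  have \<rho>K\<^sub>p: "finite_measure (\<rho> \<star> K\<^sub>p)"
    using convolution_finite[OF \<rho>(1) K\<^sub>p(1) K\<^sub>p(2) \<rho>(2)] .
  have commute: "(K\<^sub>p \<star> \<rho>) = (\<rho> \<star> K\<^sub>p)" "(K\<^sub>m \<star> \<rho>) = (\<rho> \<star> K\<^sub>m)"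
    using convolution_commutative \<rho> K\<^sub>p K\<^sub>m by metis+
  have inverse_kernels: "AE x in lborel. conv_fun (\<rho> \<star> K\<^sub>p) f x - conv_fun (\<rho> \<star> K\<^sub>m) f x = f x"
    if "integrable lborel f" for f
    using \<rho>K\<^sub>p kernels that by (rule conv_fun_inverse_kernels)
  note integrable = integrable_conv_fun
  have "integrable lborel (S f) \<and> (AE x in lborel. S f x = S g x)"
    if "integrable lborel f" "integrable lborel g" "AE x in lborel. f x = g x" for f g
    using integrable[OF K\<^sub>p that(1)] integrable[OF K\<^sub>m that(1)]
      conv_fun_AE_cong[OF K\<^sub>p that] conv_fun_AE_cong[OF K\<^sub>m that]
    by (auto simp: S_def elim!: AE_mp)
  moreover have "AE x in lborel. conv_fun \<rho> (S f) x = f x" if f: "integrable lborel f" for f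
    using conv_fun_diff[OF \<rho> integrable[OF K\<^sub>p f] integrable[OF K\<^sub>m f]]
      conv_fun_convolution[OF \<rho> K\<^sub>p f] conv_fun_convolution[OF \<rho> K\<^sub>m f] inverse_kernels[OF f]
    unfolding S_def by eventually_elim simp
  moreover have "AE x in lborel. S (conv_fun \<rho> f) x = f x" if f: "integrable lborel f" for f
    using conv_fun_convolution[OF K\<^sub>p \<rho> f] conv_fun_convolution[OF K\<^sub>m \<rho> f] inverse_kernels[OF f]
    unfolding S_def commute by eventually_elim simp
  moreover have "AE x in lborel. S (\<lambda>y. a * f y + b * g y) x = a * S f x + b * S g x"
    if "integrable lborel f" "integrable lborel g" for f g a b
    using conv_fun_linear[OF K\<^sub>p that, of a b] conv_fun_linear[OF K\<^sub>m that, of a b]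
    unfolding S_def by eventually_elim (simp add: algebra_simps)
  moreover have "(\<integral>x. \<bar>S f x\<bar> \<partial>lborel) \<le> (measure K\<^sub>p UNIV + measure K\<^sub>m UNIV) * (\<integral>x. \<bar>f x\<bar> \<partial>lborel)"
    if "integrable lborel f" for f
    unfolding S_def using K\<^sub>p K\<^sub>m that by (rule L1_norm_conv_fun_diff_le)
  moreover have "integrable lborel (conv_fun \<rho> f) \<and> (AE x in lborel. conv_fun \<rho> f x = conv_fun \<rho> g x)"
    if "integrable lborel f" "integrable lborel g" "AE x in lborel. f x = g x" for f g
    using integrable[OF \<rho> that(1)] conv_fun_AE_cong[OF \<rho> that] by simp
  ultimately show ?thesis
    unfolding L1_invertible_def by (intro conjI allI impI exI[of _ S]) auto
qed

lemma measure_convolution_prob_space_UNIV: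
  fixes M P :: "real measure"
  assumes M: "finite_measure M" "sets M = sets borel" and P: "prob_space P" "sets P = sets borel"
  shows "measure (M \<star> P) UNIV = measure M UNIV"
proof -
  interpret P: prob_space P by fact
  have "measure (M \<star> P) UNIV = (\<integral>y. measure P UNIV \<partial>M)"
    using measure_convolution[OF M P.finite_measure_axioms P(2)] by simp
  then show ?thesis
    using P.prob_space sets_eq_imp_space_eq[OF P(2)] sets_eq_imp_space_eq[OF M(2)] by simp
qed

theorem theorem4:
  fixes \<eta> \<mu>\<^sub>\<epsilon> :: "real measure"
  assumes "prob_space \<mu>\<^sub>\<epsilon>" and "sets \<mu>\<^sub>\<epsilon> = sets borel"
    and "finite_measure \<eta>" and "sets \<eta> = sets borel"
    and "measure \<eta> UNIV < 2 * min (measure (\<eta> \<star> \<mu>\<^sub>\<epsilon>) {0}) 1"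
  shows "sm_invertible (conv_sm (\<eta> \<star> \<mu>\<^sub>\<epsilon>))
     \<and> L1_invertible (conv_fun (\<eta> \<star> \<mu>\<^sub>\<epsilon>))"
proof -
  define \<rho> where "\<rho> = (\<eta> \<star> \<mu>\<^sub>\<epsilon>)"
  have \<rho>: "finite_measure \<rho>" "sets \<rho> = sets borel"
    using convolution_finite[OF assms(3) prob_space.finite_measure[OF assms(1)] assms(2,4)]
    by (simp_all add: \<rho>_def)
  \<comment> \<open>only \<open>\<eta>(\<real>) < 2 (\<eta> * \<mu>\<^sub>\<epsilon>)({0})\<close> is needed, the bound \<open>\<eta>(\<real>) < 2\<close> is not\<close>
  have "measure \<rho> UNIV < 2 * measure \<rho> {0}"
    using assms(5) measure_convolution_prob_space_UNIV[OF assms(3,4,1,2)] by (simp add: \<rho>_def)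
  then obtain K\<^sub>p K\<^sub>m where "finite_measure K\<^sub>p" "sets K\<^sub>p = sets borel" "finite_measure K\<^sub>m" "sets K\<^sub>m = sets borel"
    "\<And>A. A \<in> sets borel \<Longrightarrow>
      emeasure (\<rho> \<star> K\<^sub>p) A = emeasure (return borel 0) A + emeasure (\<rho> \<star> K\<^sub>m) A"
    using inverse_kernels_exist[OF \<rho>] by blast
  then show ?thesis
    unfolding \<rho>_def[symmetric] using sm_invertible_conv_sm[OF \<rho>] L1_invertible_conv_fun[OF \<rho>] by blast
qed

end
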